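(* Let $\mathcal H$ be a real Hilbert space, $t_0>0$, let $f:\mathcal H\to\mathbb R$ be convex and $\mathcal C^1$ with $L$-Lipschitz continuous gradient and nonempty set of minimizers. Let $\alpha>3$, $\gamma>0$, $\beta\ge0$, $\beta(t)=\gamma+\beta/t$, let $b\in]0,\alpha-1]$ and $$a(t)=t^2\left(1+\frac{(\alpha-b)\gamma t-\beta(\alpha+1-b)}{t^2-\alpha\gamma t-\beta(\alpha+1)}\right),\qquad m(t)=\max\big(t,\,L|a(t)\beta(t)|,\,L|a(t)|\beta(t)^2\big).$$ Let $e\in\mathcal C([t_0,+\infty[;\mathcal H)$ with $m(\cdot)e(\cdot)\in L^1(t_0,+\infty;\mathcal H)$, and let $x$ be a solution of $$\ddot x(t)+\frac\alpha t\dot x(t)+\nabla f\big(x(t)+\beta(t)\dot x(t)\big)+e(t)=0.$$ Then $x(t)$ converges weakly, as $t\to+\infty$, to a minimizer of $f$. *)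

theory Defs
  imports "HOL-Analysis.Analysis"
begin

definition weakly_converges_at_top :: "(real \<Rightarrow> 'a::real_inner) \<Rightarrow> 'a \<Rightarrow> bool" where
  "weakly_converges_at_top x z \<longleftrightarrow> (\<forall>v. ((\<lambda>t. inner (x t) v) \<longlongrightarrow> inner z v) at_top)"

end

theory Submission
  imports Defs "HOL-Library.Diagonal_Subsequence" "HOL-Real_Asymp.Real_Asymp"
begin

(*
  For a minimizer z and a parameter b consider the energy
    E\<^sub>b(t) = a\<^sub>b(t) (f(y) - f(z)) + |b (x - z) + t x'|\<^sup>2 / 2 + b (\<alpha> - 1 - b) / 2 |x - z|\<^sup>2,
  where y = x + \<beta>(t) x' and a\<^sub>b(t) = t\<^sup>2 (t\<^sup>2 - b \<gamma> t - b \<beta>) / (t\<^sup>2 - \<alpha> \<gamma> t - \<beta> (\<alpha> + 1)) is the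
  coefficient a(t) of the statement.  Along a trajectory
    E\<^sub>b' = (a\<^sub>b' - b t) (f(y) - f(z)) - (\<alpha> - 1 - b) t |x'|\<^sup>2 - a\<^sub>b \<beta>(t) |\<nabla>f(y)|\<^sup>2
          - b t (<y - z, \<nabla>f(y)> - (f(y) - f(z))) + (terms linear in e),
  because a\<^sub>b is exactly the coefficient that cancels the cross term <x', \<nabla>f(y)>.  As a\<^sub>b(t) ~ t\<^sup>2 and
  a\<^sub>b'(t) ~ 2 t, the terms in e are bounded by \<psi>(t) (|x - z| + t |x'|) with \<psi> = (t + L t\<^sup>2) |e|,
  which is integrable because m dominates t + L t\<^sup>2.
  For b = (\<alpha> + 1) / 2 > 2 the first term is dissipative, so a Gronwall argument bounds E\<^sub>b and
  hence |x - z| + t |x'|; then E\<^sub>b converges.  A suitable combination of E\<^sub>0 and E\<^sub>b is nonincreasing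
  up to an integrable error, so E\<^sub>0 converges as well and t (f(y) - f(z)) tends to 0.  The difference
  E\<^sub>b - E\<^sub>0 then shows that (\<alpha> - 1) h + t h' converges for h = |x - z|\<^sup>2 / 2, hence |x(t) - z|
  converges.  Finally y - x tends to 0 and f(y) to min f, so every weak cluster point of x is a
  minimizer, and Opial's lemma gives weak convergence.
*)

section \<open>Nearest points and weak compactness in Hilbert spaces\<close>

lemma Cauchy_of_dist_le_null:
  fixes P :: "nat \<Rightarrow> 'a::metric_space"
  assumes dist_le: "\<And>m n. dist (P m) (P n) \<le> B m + B n" and "B \<longlonglongrightarrow> 0"
  shows "Cauchy P"
proof (rule metric_CauchyI)
  fix \<epsilon> :: real assume "\<epsilon> > 0"
  then obtain N where N: "\<And>n. n \<ge> N \<Longrightarrow> \<bar>B n\<bar> < \<epsilon> / 2"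
    using LIMSEQ_D[OF \<open>B \<longlonglongrightarrow> 0\<close>, of "\<epsilon> / 2"] by auto
  have "dist (P m) (P n) < \<epsilon>" if "m \<ge> N" "n \<ge> N" for m n
    using dist_le[of m n] N[OF that(1)] N[OF that(2)] by linarith
  then show "\<exists>M. \<forall>m\<ge>M. \<forall>n\<ge>M. dist (P m) (P n) < \<epsilon>" by blast
qed

lemma closed_convex_nearest_point:
  fixes C :: "'a::{real_inner,complete_space} set"
  assumes "closed C" and "convex C" and "C \<noteq> {}"
  obtains p where "p \<in> C" and "\<And>c. c \<in> C \<Longrightarrow> norm (v - p) \<le> norm (v - c)"
proof -
  define d where "d = Inf ((\<lambda>p. (norm (v - p))\<^sup>2) ` C)"
  have bdd: "bdd_below ((\<lambda>p. (norm (v - p))\<^sup>2) ` C)" by (rule bdd_belowI[of _ 0]) auto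
  have d_le: "d \<le> (norm (v - p))\<^sup>2" if "p \<in> C" for p
    unfolding d_def by (rule cINF_lower[OF bdd that])
  have "\<exists>p\<in>C. (norm (v - p))\<^sup>2 < d + 1 / (real n + 1)" for n
  proof -
    have "d < d + 1 / (real n + 1)" by simp
    then show ?thesis unfolding d_def using \<open>C \<noteq> {}\<close> by (subst (asm) cINF_less_iff[OF _ bdd]) auto
  qed
  then obtain P where PC: "\<And>n. P n \<in> C" and Pd: "\<And>n. (norm (v - P n))\<^sup>2 < d + 1 / (real n + 1)"
    by metis
  \<comment> \<open>the parallelogram law at the midpoint makes the minimizing sequence Cauchy\<close>
  have parallelogram: "(norm (P n - P m))\<^sup>2 \<le> 2 / (real n + 1) + 2 / (real m + 1)" for n m
  proof -
    have "(1/2) *\<^sub>R P n + (1/2) *\<^sub>R P m \<in> C" using PC by (intro convexD[OF \<open>convex C\<close>]) auto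
    moreover have "(norm (P n - P m))\<^sup>2 = 2 * (norm (v - P n))\<^sup>2 + 2 * (norm (v - P m))\<^sup>2
              - 4 * (norm (v - ((1/2) *\<^sub>R P n + (1/2) *\<^sub>R P m)))\<^sup>2"
      by (simp add: power2_norm_eq_inner inner_diff_left inner_diff_right inner_add_left
          inner_add_right inner_commute algebra_simps)
    ultimately show ?thesis using d_le Pd[of n] Pd[of m] by fastforce
  qed
  have "dist (P m) (P n) \<le> sqrt (2 / (real m + 1)) + sqrt (2 / (real n + 1))" for m n
    using real_le_rsqrt[OF parallelogram[of m n]] sqrt_add_le_add_sqrt[of "2 / (real m + 1)" "2 / (real n + 1)"]
    by (simp add: dist_norm norm_minus_commute)
  moreover have "(\<lambda>n. sqrt (2 / (real n + 1))) \<longlonglongrightarrow> 0" by real_asymp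
  ultimately have "Cauchy P" by (rule Cauchy_of_dist_le_null)
  then obtain p where Pp: "P \<longlonglongrightarrow> p" using Cauchy_convergent_iff convergent_def by blast
  have "(norm (v - p))\<^sup>2 \<le> d"
  proof (rule tendsto_le[OF sequentially_bot])
    show "(\<lambda>n. d + 1 / (real n + 1)) \<longlonglongrightarrow> d"
      using LIMSEQ_inverse_real_of_nat_add[of d] by (simp add: inverse_eq_divide add.commute)
    show "(\<lambda>n. (norm (v - P n))\<^sup>2) \<longlonglongrightarrow> (norm (v - p))\<^sup>2" by (intro tendsto_intros Pp)
  qed (use Pd less_imp_le in \<open>auto intro: always_eventually\<close>)
  then have "norm (v - p) \<le> norm (v - c)" if "c \<in> C" for c
    using d_le[OF that] by (simp add: power2_le_imp_le)
  moreover have "p \<in> C" using \<open>closed C\<close> PC Pp closed_sequentially by blast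
  ultimately show ?thesis using that by blast
qed

lemma orthogonal_projection_closed_subspace:
  fixes C :: "'a::{real_inner,complete_space} set"
  assumes "closed C" and "subspace C"
  obtains p where "p \<in> C" and "\<And>c. c \<in> C \<Longrightarrow> inner (v - p) c = 0"
proof -
  have "0 \<in> C" using \<open>subspace C\<close> by (simp add: subspace_0)
  then obtain p where "p \<in> C" and nearest: "\<And>c. c \<in> C \<Longrightarrow> norm (v - p) \<le> norm (v - c)"
    using closed_convex_nearest_point \<open>closed C\<close> subspace_imp_convex[OF \<open>subspace C\<close>] by blast
  have "inner (v - p) c = 0" if "c \<in> C" and "c \<noteq> 0" for c
  proof -
    define a where "a = inner (v - p) c"
    define s where "s = a / (norm c)\<^sup>2"
    have "p + s *\<^sub>R c \<in> C" using \<open>p \<in> C\<close> that \<open>subspace C\<close> by (simp add: subspace_add subspace_scale)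
    then have "(norm (v - p))\<^sup>2 \<le> (norm (v - (p + s *\<^sub>R c)))\<^sup>2"
      using nearest by (simp add: power_mono)
    also have "\<dots> = (norm (v - p))\<^sup>2 - 2 * s * a + s\<^sup>2 * (norm c)\<^sup>2"
      unfolding a_def by (simp only: power2_norm_eq_inner)
        (simp add: inner_diff_left inner_diff_right inner_add_left inner_add_right inner_commute
          algebra_simps power2_eq_square)
    also have "\<dots> = (norm (v - p))\<^sup>2 - a\<^sup>2 / (norm c)\<^sup>2"
      using \<open>c \<noteq> 0\<close> unfolding s_def by (simp add: field_simps power2_eq_square)
    finally have "a\<^sup>2 / (norm c)\<^sup>2 \<le> 0" by simp
    then show ?thesis using \<open>c \<noteq> 0\<close> unfolding a_def by (simp add: divide_le_0_iff)
  qed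
  then show ?thesis using that \<open>p \<in> C\<close> by (metis inner_zero_right)
qed

lemma riesz_representation:
  fixes \<phi> :: "'a::{real_inner,complete_space} \<Rightarrow> real"
  assumes "bounded_linear \<phi>"
  obtains w where "\<And>v. \<phi> v = inner w v"
proof (cases "\<forall>v. \<phi> v = 0")
  case True
  then show ?thesis using that[of 0] by simp
next
  case False
  interpret \<phi>: bounded_linear \<phi> by fact
  obtain v0 where "\<phi> v0 \<noteq> 0" using False by blast
  define N where "N = {v. \<phi> v = 0}"
  have "closed N"
    unfolding N_def using continuous_closed_vimage[of "{0}" \<phi>] \<phi>.isCont[OF continuous_ident]
    by (simp add: vimage_def)
  moreover have "subspace N" unfolding N_def subspace_def by (simp add: \<phi>.add \<phi>.scale)
  ultimately obtain p where "p \<in> N" and p: "\<And>c. c \<in> N \<Longrightarrow> inner (v0 - p) c = 0"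
    using orthogonal_projection_closed_subspace by blast
  define w0 where "w0 = v0 - p"
  have "\<phi> w0 = \<phi> v0" using \<open>p \<in> N\<close> unfolding w0_def N_def by (simp add: \<phi>.diff)
  then have "inner w0 w0 \<noteq> 0" using \<open>\<phi> v0 \<noteq> 0\<close> by auto
  have "\<phi> v = inner ((\<phi> w0 / inner w0 w0) *\<^sub>R w0) v" for v
  proof -
    have "v - (\<phi> v / \<phi> w0) *\<^sub>R w0 \<in> N"
      unfolding N_def using \<open>\<phi> w0 = \<phi> v0\<close> \<open>\<phi> v0 \<noteq> 0\<close> by (simp add: \<phi>.diff \<phi>.scale)
    then have "inner w0 (v - (\<phi> v / \<phi> w0) *\<^sub>R w0) = 0" using p unfolding w0_def by blast
    then have "inner w0 v = (\<phi> v / \<phi> w0) * inner w0 w0" by (simp add: inner_diff_right)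
    then show ?thesis using \<open>inner w0 w0 \<noteq> 0\<close> \<open>\<phi> w0 = \<phi> v0\<close> \<open>\<phi> v0 \<noteq> 0\<close> by simp
  qed
  then show ?thesis using that by blast
qed

lemma closed_inner_convergent:
  fixes u :: "nat \<Rightarrow> 'a::real_inner"
  assumes bounded: "\<And>n. norm (u n) \<le> M"
  shows "closed {v. convergent (\<lambda>n. inner (u n) v)}"
proof -
  have "0 \<le> M" using bounded[of 0] norm_ge_zero order_trans by blast
  have cauchy: "Cauchy (\<lambda>n. inner (u n) v)" if v: "v \<in> closure {v. convergent (\<lambda>n. inner (u n) v)}" for v
  proof (rule metric_CauchyI)
    fix \<epsilon> :: real assume "\<epsilon> > 0"
    moreover have "\<epsilon> / (3 * (M + 1)) > 0" using \<open>\<epsilon> > 0\<close> \<open>0 \<le> M\<close> by simp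
    ultimately obtain w where "convergent (\<lambda>n. inner (u n) w)" and wv: "dist w v < \<epsilon> / (3 * (M + 1))"
      using v unfolding closure_approachable mem_Collect_eq by auto
    then have "Cauchy (\<lambda>n. inner (u n) w)" by (simp add: Cauchy_convergent_iff)
    moreover have "\<epsilon> / 3 > 0" using \<open>\<epsilon> > 0\<close> by simp
    ultimately obtain N where N: "\<And>m n. m \<ge> N \<Longrightarrow> n \<ge> N \<Longrightarrow> dist (inner (u m) w) (inner (u n) w) < \<epsilon> / 3"
      by (meson metric_CauchyD)
    have "dist (inner (u m) v) (inner (u n) v) < \<epsilon>" if "N \<le> m" "N \<le> n" for m n
    proof -
      have "\<bar>inner (u m - u n) (v - w)\<bar> \<le> norm (u m - u n) * norm (v - w)"
        by (rule Cauchy_Schwarz_ineq2)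
      also have "\<dots> \<le> (2 * M) * (\<epsilon> / (3 * (M + 1)))"
      proof (rule mult_mono)
        show "norm (u m - u n) \<le> 2 * M"
          using norm_triangle_ineq4[of "u m" "u n"] bounded[of m] bounded[of n] by linarith
        show "norm (v - w) \<le> \<epsilon> / (3 * (M + 1))" using wv by (simp add: dist_norm norm_minus_commute)
      qed (use \<open>0 \<le> M\<close> in auto)
      also have "\<dots> < 2 * (\<epsilon> / 3)"
        using \<open>0 \<le> M\<close> \<open>\<epsilon> > 0\<close> by (simp add: field_simps)
      finally have "\<bar>inner (u m - u n) (v - w)\<bar> < 2 * (\<epsilon> / 3)" .
      moreover have "inner (u m) v - inner (u n) v
          = (inner (u m) w - inner (u n) w) + inner (u m - u n) (v - w)"
        by (simp add: inner_diff_left inner_diff_right)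
      ultimately show ?thesis using N[OF that] unfolding dist_real_def by linarith
    qed
    then show "\<exists>N. \<forall>m\<ge>N. \<forall>n\<ge>N. dist (inner (u m) v) (inner (u n) v) < \<epsilon>" by blast
  qed
  then have "closure {v. convergent (\<lambda>n. inner (u n) v)} \<subseteq> {v. convergent (\<lambda>n. inner (u n) v)}"
    using cauchy Cauchy_convergent_iff by blast
  then show ?thesis using closure_subset_eq by blast
qed

lemma bounded_inner_diagonal_subseq:
  fixes u :: "nat \<Rightarrow> 'a::real_inner"
  assumes bounded: "\<And>n. norm (u n) \<le> M"
  obtains r where "strict_mono r" and "\<And>k. convergent (\<lambda>n. inner (u (r n)) (u k))"
proof -
  have "0 \<le> M" using bounded[of 0] norm_ge_zero order_trans by blast
  interpret S: subseqs "\<lambda>k s. convergent (\<lambda>n. inner (u (s n)) (u k))"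
  proof
    fix k :: nat and s :: "nat \<Rightarrow> nat"
    have "bounded (range (\<lambda>n. inner (u (s n)) (u k)))"
    proof (rule boundedI)
      fix y assume "y \<in> range (\<lambda>n. inner (u (s n)) (u k))"
      then obtain n where y: "y = inner (u (s n)) (u k)" by auto
      have "norm y \<le> norm (u (s n)) * norm (u k)"
        unfolding y real_norm_def by (rule Cauchy_Schwarz_ineq2)
      also have "\<dots> \<le> M * M" using bounded \<open>0 \<le> M\<close> by (intro mult_mono) auto
      finally show "norm y \<le> M * M" .
    qed
    then obtain l r where "strict_mono r" "((\<lambda>n. inner (u (s n)) (u k)) \<circ> r) \<longlonglongrightarrow> l"
      using bounded_imp_convergent_subsequence by blast
    then show "\<exists>r'. strict_mono r' \<and> convergent (\<lambda>n. inner (u ((s \<circ> r') n)) (u k))"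
      by (auto simp: convergent_def o_def)
  qed
  have diagonal: "convergent (\<lambda>n. inner (u (S.diagseq n)) (u k))" for k
  proof -
    have "convergent (\<lambda>n. inner (u ((S.diagseq \<circ> (+) (Suc k)) n)) (u k))"
    proof (rule S.diagseq_holds)
      show "convergent (\<lambda>m. inner (u ((s \<circ> r') m)) (u n))"
        if "strict_mono r'" "convergent (\<lambda>m. inner (u (s m)) (u n))" for r' s n
        using that by (auto simp: convergent_def o_def intro: LIMSEQ_subseq_LIMSEQ[unfolded o_def])
    qed
    then obtain l where "(\<lambda>n. inner (u (S.diagseq (n + Suc k))) (u k)) \<longlonglongrightarrow> l"
      by (auto simp: convergent_def o_def add.commute)
    then have "(\<lambda>n. inner (u (S.diagseq n)) (u k)) \<longlonglongrightarrow> l"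
      by (rule LIMSEQ_offset[of "\<lambda>n. inner (u (S.diagseq n)) (u k)"])
    then show ?thesis unfolding convergent_def by blast
  qed
  show ?thesis by (rule that[OF S.subseq_diagseq diagonal])
qed

lemma weakly_convergent_of_inner_convergent:
  fixes u :: "nat \<Rightarrow> 'a::{real_inner,complete_space}"
  assumes bounded: "\<And>n. norm (u n) \<le> M" and convergent: "\<And>v. convergent (\<lambda>n. inner (u n) v)"
  obtains w where "\<And>v. (\<lambda>n. inner (u n) v) \<longlonglongrightarrow> inner w v"
proof -
  have lim: "(\<lambda>n. inner (u n) v) \<longlonglongrightarrow> lim (\<lambda>n. inner (u n) v)" for v
    using convergent convergent_LIMSEQ_iff by blast
  have "bounded_linear (\<lambda>v. lim (\<lambda>n. inner (u n) v))"
  proof (rule bounded_linear_intro)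
    show "lim (\<lambda>n. inner (u n) (v + w)) = lim (\<lambda>n. inner (u n) v) + lim (\<lambda>n. inner (u n) w)" for v w
      using tendsto_add[OF lim[of v] lim[of w]] by (simp add: inner_add_right limI)
    show "lim (\<lambda>n. inner (u n) (c *\<^sub>R v)) = c *\<^sub>R lim (\<lambda>n. inner (u n) v)" for c v
      using tendsto_mult_left[OF lim[of v], of c] by (simp add: limI)
    show "norm (lim (\<lambda>n. inner (u n) v)) \<le> norm v * M" for v
    proof (rule tendsto_upperbound[OF tendsto_norm[OF lim[of v]]])
      have "norm (inner (u n) v) \<le> norm v * M" for n
        using Cauchy_Schwarz_ineq2[of "u n" v] mult_right_mono[OF bounded[of n], of "norm v"]
        by (simp add: mult.commute)
      then show "\<forall>\<^sub>F n in sequentially. norm (inner (u n) v) \<le> norm v * M" by simp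
    qed simp
  qed
  then obtain w where "\<And>v. lim (\<lambda>n. inner (u n) v) = inner w v"
    using riesz_representation by blast
  then show ?thesis using lim by (intro that) simp
qed

lemma bounded_imp_weakly_convergent_subseq:
  fixes u :: "nat \<Rightarrow> 'a::{real_inner,complete_space}"
  assumes bounded: "\<And>n. norm (u n) \<le> M"
  obtains r w where "strict_mono r" and "\<And>v. (\<lambda>n. inner (u (r n)) v) \<longlonglongrightarrow> inner w v"
proof (rule bounded_inner_diagonal_subseq[OF bounded])
  fix r assume "strict_mono r" and diagonal: "\<And>k. convergent (\<lambda>n. inner (u (r n)) (u k))"
  define C where "C = {v. convergent (\<lambda>n. inner (u (r n)) v)}"
  have "subspace C"
    unfolding subspace_def C_def
    by (auto simp: inner_add_right convergent_def intro: tendsto_add tendsto_mult_left)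
  moreover have "closed C"
    unfolding C_def by (rule closed_inner_convergent[of _ M]) (rule bounded)
  \<comment> \<open>testing against \<open>v\<close> is the same as testing against its projection onto \<open>C \<supseteq> range u\<close>\<close>
  ultimately have convergent: "convergent (\<lambda>n. inner (u (r n)) v)" for v
  proof -
    obtain p where "p \<in> C" and p: "\<And>c. c \<in> C \<Longrightarrow> inner (v - p) c = 0"
      using orthogonal_projection_closed_subspace[OF \<open>closed C\<close> \<open>subspace C\<close>] by blast
    have "u k \<in> C" for k using diagonal unfolding C_def by simp
    then have "inner (v - p) (u (r n)) = 0" for n by (rule p)
    then have "inner (u (r n)) v = inner (u (r n)) p" for n
      by (simp add: inner_diff_left inner_commute)
    then show ?thesis using \<open>p \<in> C\<close> unfolding C_def by simp
  qed
  have "norm (u (r n)) \<le> M" for n by (rule bounded)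
  then show ?thesis
  proof (rule weakly_convergent_of_inner_convergent)
    show "convergent (\<lambda>n. inner (u (r n)) v)" for v by (rule convergent)
    fix w assume "\<And>v. (\<lambda>n. inner (u (r n)) v) \<longlonglongrightarrow> inner w v"
    with \<open>strict_mono r\<close> show thesis by (rule that)
  qed
qed

section \<open>Opial's lemma\<close>

lemma weak_cluster_points_eq:
  fixes X :: "real \<Rightarrow> 'a::real_inner"
  assumes "((\<lambda>t. norm (X t - u\<^sub>1)) \<longlongrightarrow> l\<^sub>1) at_top" and "((\<lambda>t. norm (X t - u\<^sub>2)) \<longlongrightarrow> l\<^sub>2) at_top"
    and "filterlim s\<^sub>1 at_top sequentially" and "\<forall>v. (\<lambda>n. inner (X (s\<^sub>1 n)) v) \<longlonglongrightarrow> inner u\<^sub>1 v"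
    and "filterlim s\<^sub>2 at_top sequentially" and "\<forall>v. (\<lambda>n. inner (X (s\<^sub>2 n)) v) \<longlonglongrightarrow> inner u\<^sub>2 v"
  shows "u\<^sub>1 = u\<^sub>2"
proof -
  define \<Phi> where "\<Phi> t = (norm (X t - u\<^sub>1))\<^sup>2 - (norm (X t - u\<^sub>2))\<^sup>2" for t
  define c where "c = (norm u\<^sub>1)\<^sup>2 - (norm u\<^sub>2)\<^sup>2"
  have \<Phi>_eq: "\<Phi> t = 2 * inner (X t) (u\<^sub>2 - u\<^sub>1) + c" for t
    unfolding \<Phi>_def c_def by (simp only: power2_norm_eq_inner)
      (simp add: inner_diff_left inner_diff_right inner_commute)
  have \<Phi>_lim: "(\<Phi> \<longlongrightarrow> l\<^sub>1\<^sup>2 - l\<^sub>2\<^sup>2) at_top" unfolding \<Phi>_def by (intro tendsto_intros assms(1,2))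
  have "2 * inner u\<^sub>1 (u\<^sub>2 - u\<^sub>1) + c = l\<^sub>1\<^sup>2 - l\<^sub>2\<^sup>2"
  proof (rule LIMSEQ_unique)
    show "(\<lambda>n. \<Phi> (s\<^sub>1 n)) \<longlonglongrightarrow> 2 * inner u\<^sub>1 (u\<^sub>2 - u\<^sub>1) + c"
      unfolding \<Phi>_eq by (intro tendsto_intros assms(4)[rule_format])
  qed (rule filterlim_compose[OF \<Phi>_lim assms(3)])
  moreover have "2 * inner u\<^sub>2 (u\<^sub>2 - u\<^sub>1) + c = l\<^sub>1\<^sup>2 - l\<^sub>2\<^sup>2"
  proof (rule LIMSEQ_unique)
    show "(\<lambda>n. \<Phi> (s\<^sub>2 n)) \<longlonglongrightarrow> 2 * inner u\<^sub>2 (u\<^sub>2 - u\<^sub>1) + c"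
      unfolding \<Phi>_eq by (intro tendsto_intros assms(6)[rule_format])
  qed (rule filterlim_compose[OF \<Phi>_lim assms(5)])
  ultimately have "inner u\<^sub>1 (u\<^sub>2 - u\<^sub>1) = inner u\<^sub>2 (u\<^sub>2 - u\<^sub>1)" by simp
  then have "inner (u\<^sub>2 - u\<^sub>1) (u\<^sub>2 - u\<^sub>1) = 0" by (simp add: inner_diff_left)
  then show ?thesis by simp
qed

lemma bounded_at_top_weak_cluster_point:
  fixes X :: "real \<Rightarrow> 'a::{real_inner,complete_space}"
  assumes bounded: "\<And>t. t \<ge> T \<Longrightarrow> norm (X t) \<le> M" and s: "\<And>n. s n \<ge> T + real n"
  obtains r u where "filterlim (\<lambda>n. s (r n)) at_top sequentially"
    and "\<forall>v. (\<lambda>n. inner (X (s (r n))) v) \<longlonglongrightarrow> inner u v"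
proof -
  have "norm (X (s n)) \<le> M" for n using s[of n] by (intro bounded) linarith
  then obtain r u where "strict_mono r" and u: "\<And>v. (\<lambda>n. inner (X (s (r n))) v) \<longlonglongrightarrow> inner u v"
    using bounded_imp_weakly_convergent_subseq[of "\<lambda>n. X (s n)" M] by blast
  have "filterlim (\<lambda>n. T + real n) at_top sequentially"
    by (intro filterlim_tendsto_add_at_top[OF tendsto_const] filterlim_real_sequentially)
  then have "filterlim s at_top sequentially"
    by (rule filterlim_at_top_mono) (use s in auto)
  then have "filterlim (\<lambda>n. s (r n)) at_top sequentially"
    by (rule filterlim_compose[OF _ filterlim_subseq[OF \<open>strict_mono r\<close>]])
  with u show ?thesis using that by blast
qed

lemma opial:
  fixes X :: "real \<Rightarrow> 'a::{real_inner,complete_space}"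
  assumes bounded: "\<And>t. t \<ge> T \<Longrightarrow> norm (X t) \<le> M"
    and dist_convergent: "\<And>z. z \<in> S \<Longrightarrow> \<exists>l. ((\<lambda>t. norm (X t - z)) \<longlongrightarrow> l) at_top"
    and cluster_points_in: "\<And>s u. filterlim s at_top sequentially \<Longrightarrow>
                 \<forall>v. (\<lambda>n. inner (X (s n)) v) \<longlonglongrightarrow> inner u v \<Longrightarrow> u \<in> S"
  shows "\<exists>z\<in>S. weakly_converges_at_top X z"
proof -
  obtain r\<^sub>1 u\<^sub>1 where s\<^sub>1: "filterlim (\<lambda>n. T + real (r\<^sub>1 n)) at_top sequentially"
    and u\<^sub>1: "\<forall>v. (\<lambda>n. inner (X (T + real (r\<^sub>1 n))) v) \<longlonglongrightarrow> inner u\<^sub>1 v"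
    using bounded_at_top_weak_cluster_point[where T = T and X = X and M = M and s = "\<lambda>n. T + real n", OF bounded] by auto
  have "u\<^sub>1 \<in> S" by (rule cluster_points_in[OF s\<^sub>1 u\<^sub>1])
  have "weakly_converges_at_top X u\<^sub>1"
    unfolding weakly_converges_at_top_def
  proof (rule allI, rule ccontr)
    fix v assume "\<not> ((\<lambda>t. inner (X t) v) \<longlongrightarrow> inner u\<^sub>1 v) at_top"
    then obtain \<epsilon> where "\<epsilon> > 0" and "\<not> eventually (\<lambda>t. dist (inner (X t) v) (inner u\<^sub>1 v) < \<epsilon>) at_top"
      unfolding tendsto_iff by auto
    then have "\<forall>N. \<exists>t. N \<le> t \<and> \<epsilon> \<le> dist (inner (X t) v) (inner u\<^sub>1 v)"
      unfolding eventually_at_top_linorder by (simp add: not_less)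
    then obtain t where t: "\<And>N. N \<le> t N" and far: "\<And>N. \<epsilon> \<le> dist (inner (X (t N)) v) (inner u\<^sub>1 v)"
      unfolding choice_iff by auto
    have "T + real n \<le> t (T + real n)" for n by (rule t)
    then obtain r\<^sub>2 u\<^sub>2 where s\<^sub>2: "filterlim (\<lambda>n. t (T + real (r\<^sub>2 n))) at_top sequentially"
      and u\<^sub>2: "\<forall>v. (\<lambda>n. inner (X (t (T + real (r\<^sub>2 n)))) v) \<longlonglongrightarrow> inner u\<^sub>2 v"
      using bounded_at_top_weak_cluster_point[where T = T and X = X and M = M and s = "\<lambda>n. t (T + real n)", OF bounded] by blast
    have "u\<^sub>2 \<in> S" by (rule cluster_points_in[OF s\<^sub>2 u\<^sub>2])
    obtain l\<^sub>1 l\<^sub>2 where l\<^sub>1: "((\<lambda>t. norm (X t - u\<^sub>1)) \<longlongrightarrow> l\<^sub>1) at_top"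
      and l\<^sub>2: "((\<lambda>t. norm (X t - u\<^sub>2)) \<longlongrightarrow> l\<^sub>2) at_top"
      using dist_convergent[OF \<open>u\<^sub>1 \<in> S\<close>] dist_convergent[OF \<open>u\<^sub>2 \<in> S\<close>] by blast
    have "u\<^sub>2 = u\<^sub>1" by (rule weak_cluster_points_eq[OF l\<^sub>2 l\<^sub>1 s\<^sub>2 u\<^sub>2 s\<^sub>1 u\<^sub>1])
    then have "eventually (\<lambda>n. dist (inner (X (t (T + real (r\<^sub>2 n)))) v) (inner u\<^sub>1 v) < \<epsilon>) sequentially"
      using tendstoD[OF u\<^sub>2[rule_format] \<open>\<epsilon> > 0\<close>] by simp
    then show False using far eventually_sequentially by (meson leD order_refl)
  qed
  then show ?thesis using \<open>u\<^sub>1 \<in> S\<close> by blast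
qed

section \<open>Convexity and real calculus\<close>

lemma has_real_derivative_inner:
  assumes "(u has_vector_derivative u') (at t)" and "(v has_vector_derivative v') (at t)"
  shows "((\<lambda>s. inner (u s) (v s)) has_real_derivative inner u' (v t) + inner (u t) v') (at t)"
proof -
  have "((\<lambda>s. inner (u s) (v s)) has_derivative (\<lambda>h. inner (u t) (h *\<^sub>R v') + inner (h *\<^sub>R u') (v t))) (at t)"
    using has_derivative_inner assms unfolding has_vector_derivative_def by blast
  then show ?thesis unfolding has_field_derivative_def
    by (rule has_derivative_eq_rhs) (auto simp: algebra_simps)
qed

lemma has_real_derivative_compose_gradient:
  assumes "(f has_derivative (\<lambda>h. inner G h)) (at (y t))" and "(y has_vector_derivative y') (at t)"
  shows "((\<lambda>s. f (y s)) has_real_derivative inner G y') (at t)"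
proof -
  have "((\<lambda>s. f (y s)) has_derivative (\<lambda>h. inner G (h *\<^sub>R y'))) (at t)"
    using has_derivative_compose assms unfolding has_vector_derivative_def by blast
  then show ?thesis unfolding has_field_derivative_def
    by (rule has_derivative_eq_rhs) (auto simp: algebra_simps)
qed

lemma convex_on_gradient_inequality:
  fixes f :: "'a::real_inner \<Rightarrow> real"
  assumes "convex_on UNIV f" and grad: "\<And>y. (f has_derivative (\<lambda>h. inner (g y) h)) (at y)"
  shows "f u + inner (g u) (w - u) \<le> f w"
proof -
  define \<phi> where "\<phi> s = f (u + s *\<^sub>R (w - u))" for s :: real
  have "convex_on UNIV \<phi>"
  proof (rule convex_onI)
    fix s\<^sub>1 s\<^sub>2 t :: real assume "0 < t" "t < 1"
    have "u + ((1 - t) * s\<^sub>1 + t * s\<^sub>2) *\<^sub>R (w - u)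
        = (1 - t) *\<^sub>R (u + s\<^sub>1 *\<^sub>R (w - u)) + t *\<^sub>R (u + s\<^sub>2 *\<^sub>R (w - u))"
      by (simp add: algebra_simps)
    then show "\<phi> ((1 - t) *\<^sub>R s\<^sub>1 + t *\<^sub>R s\<^sub>2) \<le> (1 - t) * \<phi> s\<^sub>1 + t * \<phi> s\<^sub>2"
      unfolding \<phi>_def using convex_onD[OF \<open>convex_on UNIV f\<close>] \<open>0 < t\<close> \<open>t < 1\<close> by simp
  qed simp
  have "((\<lambda>s. u + s *\<^sub>R (w - u)) has_vector_derivative (w - u)) (at 0)"
    by (auto intro!: derivative_eq_intros)
  then have "(\<phi> has_real_derivative inner (g u) (w - u)) (at 0)"
    unfolding \<phi>_def
    using has_real_derivative_compose_gradient[OF grad, where y = "\<lambda>s. u + s *\<^sub>R (w - u)" and t = 0] by simp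
  then have "inner (g u) (w - u) * (1 - 0) \<le> \<phi> 1 - \<phi> 0"
    by (intro convex_on_imp_above_tangent[OF \<open>convex_on UNIV \<phi>\<close>]) auto
  then show ?thesis unfolding \<phi>_def by simp
qed

lemma convex_weak_limit_minimizer:
  fixes f :: "'a::real_inner \<Rightarrow> real"
  assumes "convex_on UNIV f" and gradient: "\<And>y. (f has_derivative (\<lambda>h. inner (g y) h)) (at y)"
    and f_Y: "(\<lambda>n. f (Y n)) \<longlonglongrightarrow> m" and m_le: "\<And>w. m \<le> f w"
    and X_weak: "\<forall>v. (\<lambda>n. inner (X n) v) \<longlonglongrightarrow> inner u v"
    and Y_X: "(\<lambda>n. norm (Y n - X n)) \<longlonglongrightarrow> 0"
  shows "f u \<le> f w"
proof -
  have "(\<lambda>n. inner (X n) (g u) - inner u (g u)) \<longlonglongrightarrow> inner u (g u) - inner u (g u)"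
    by (intro tendsto_intros X_weak[rule_format])
  then have "(\<lambda>n. inner (g u) (X n - u)) \<longlonglongrightarrow> 0"
    by (simp add: inner_diff_right inner_commute)
  moreover have "(\<lambda>n. inner (g u) (Y n - X n)) \<longlonglongrightarrow> 0"
  proof (rule Lim_null_comparison)
    show "\<forall>\<^sub>F n in sequentially. norm (inner (g u) (Y n - X n)) \<le> norm (g u) * norm (Y n - X n)"
      by (simp add: Cauchy_Schwarz_ineq2)
    show "(\<lambda>n. norm (g u) * norm (Y n - X n)) \<longlonglongrightarrow> 0"
      using tendsto_mult_right_zero[OF Y_X] .
  qed
  ultimately have "(\<lambda>n. f u + (inner (g u) (X n - u) + inner (g u) (Y n - X n))) \<longlonglongrightarrow> f u + (0 + 0)"
    by (intro tendsto_intros)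
  then have "(\<lambda>n. f u + inner (g u) (Y n - u)) \<longlonglongrightarrow> f u"
    by (simp add: inner_diff_right)
  moreover have "f u + inner (g u) (Y n - u) \<le> f (Y n)" for n
    by (rule convex_on_gradient_inequality[OF \<open>convex_on UNIV f\<close> gradient])
  ultimately have "f u \<le> m"
    using f_Y by (intro tendsto_le[OF sequentially_bot]) auto
  then show ?thesis using m_le order_trans by blast
qed

lemma gradient_eq_0_at_minimizer:
  assumes "(f has_derivative (\<lambda>h. inner G h)) (at z)" and "\<And>w. f z \<le> f w"
  shows "G = 0"
proof -
  have "(\<lambda>h. inner G h) = (\<lambda>h. 0)"
    by (rule has_derivative_local_min[OF assms(1)]) (use assms(2) in auto)
  then have "inner G G = 0" by metis
  then show ?thesis by simp
qed

lemma nonincreasing_of_nonpos_deriv: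
  fixes P P' :: "real \<Rightarrow> real"
  assumes "\<And>t. t \<ge> T \<Longrightarrow> (P has_real_derivative P' t) (at t)"
    and "\<And>t. t \<ge> T \<Longrightarrow> P' t \<le> 0" and "T \<le> s" "s \<le> t"
  shows "P t \<le> P s"
proof (rule DERIV_nonpos_imp_nonincreasing[OF \<open>s \<le> t\<close>])
  show "\<exists>y. (P has_real_derivative y) (at x) \<and> y \<le> 0" if "s \<le> x" for x
    using assms that by (intro exI[of _ "P' x"]) auto
qed

lemma convergent_of_nonpos_deriv_bounded_below:
  fixes P P' :: "real \<Rightarrow> real"
  assumes deriv: "\<And>t. t \<ge> T \<Longrightarrow> (P has_real_derivative P' t) (at t)"
    and nonpos: "\<And>t. t \<ge> T \<Longrightarrow> P' t \<le> 0" and bounded: "\<And>t. t \<ge> T \<Longrightarrow> c \<le> P t"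
  shows "\<exists>l. (P \<longlongrightarrow> l) at_top"
proof -
  define l where "l = Inf (P ` {T..})"
  have bdd: "bdd_below (P ` {T..})" using bounded by (intro bdd_belowI[of _ c]) auto
  have "(P \<longlongrightarrow> l) at_top"
  proof (rule tendstoI)
    fix \<epsilon> :: real assume "\<epsilon> > 0"
    then have "l < l + \<epsilon>" by simp
    then obtain t\<^sub>1 where "t\<^sub>1 \<ge> T" "P t\<^sub>1 < l + \<epsilon>"
      unfolding l_def using bdd by (subst (asm) cInf_less_iff) auto
    moreover have "l \<le> P t" if "t \<ge> T" for t
      unfolding l_def using bdd that by (auto intro: cInf_lower)
    moreover have "P t \<le> P t\<^sub>1" if "t \<ge> t\<^sub>1" for t
      using nonincreasing_of_nonpos_deriv[OF deriv nonpos \<open>t\<^sub>1 \<ge> T\<close> that] .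
    ultimately show "\<forall>\<^sub>F t in at_top. dist (P t) l < \<epsilon>"
      unfolding eventually_at_top_linorder dist_real_def by (smt (verit))
  qed
  then show ?thesis by blast
qed

lemma tendsto_of_tendsto_euler_combination:
  fixes h h' :: "real \<Rightarrow> real"
  assumes "a > 0" and deriv: "\<And>t. t \<ge> T \<Longrightarrow> (h has_real_derivative h' t) (at t)"
    and lim: "((\<lambda>t. a * h t + t * h' t) \<longlongrightarrow> q) at_top"
  shows "(h \<longlongrightarrow> q / a) at_top"
proof -
  have "((\<lambda>t. t powr a * h t / t powr a) \<longlongrightarrow> q / a) at_top"
  proof (rule lhospital_at_top_at_top)
    show "LIM t at_top. t powr a :> at_top" using \<open>a > 0\<close> by real_asymp
    show "\<forall>\<^sub>F t in at_top. a * t powr (a - 1) \<noteq> 0"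
      using eventually_gt_at_top[of 0] by eventually_elim (use \<open>a > 0\<close> in simp)
    show "\<forall>\<^sub>F t in at_top. ((\<lambda>t. t powr a * h t) has_real_derivative
            a * t powr (a - 1) * h t + t powr a * h' t) (at t)"
      using eventually_gt_at_top[of "max 0 T"]
      by eventually_elim (auto intro!: derivative_eq_intros deriv)
    show "\<forall>\<^sub>F t in at_top. ((\<lambda>t. t powr a) has_real_derivative a * t powr (a - 1)) (at t)"
      using eventually_gt_at_top[of 0] by eventually_elim (auto intro!: derivative_eq_intros)
    have "\<forall>\<^sub>F t in at_top. (a * h t + t * h' t) / a
            = (a * t powr (a - 1) * h t + t powr a * h' t) / (a * t powr (a - 1))"
      using eventually_gt_at_top[of 0]
      by eventually_elim (use \<open>a > 0\<close> in \<open>simp add: powr_diff field_simps\<close>)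
    then show "((\<lambda>t. (a * t powr (a - 1) * h t + t powr a * h' t) / (a * t powr (a - 1))) \<longlongrightarrow> q / a) at_top"
      using tendsto_divide[OF lim tendsto_const, of a] \<open>a > 0\<close> tendsto_cong by fastforce
  qed
  moreover have "\<forall>\<^sub>F t in at_top. t powr a * h t / t powr a = h t"
    using eventually_gt_at_top[of 0] by eventually_elim simp
  ultimately show ?thesis using tendsto_cong by fastforce
qed

lemma gronwall_exp_bound:
  fixes E E' \<Psi> \<psi> :: "real \<Rightarrow> real"
  assumes E: "\<And>t. t \<ge> T \<Longrightarrow> (E has_real_derivative E' t) (at t)"
    and \<Psi>: "\<And>t. t \<ge> T \<Longrightarrow> (\<Psi> has_real_derivative \<psi> t) (at t)"
    and E'_le: "\<And>t. t \<ge> T \<Longrightarrow> E' t \<le> c * \<psi> t * (1 + E t)"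
    and "T \<le> t"
  shows "1 + E t \<le> (1 + E T) * exp (c * (\<Psi> t - \<Psi> T))"
proof -
  define H where "H s = (1 + E s) * exp (- c * \<Psi> s)" for s
  define H' where "H' s = (E' s - c * \<psi> s * (1 + E s)) * exp (- c * \<Psi> s)" for s
  have "(H has_real_derivative H' s) (at s)" if "s \<ge> T" for s
    unfolding H_def H'_def using that by (auto intro!: derivative_eq_intros E \<Psi> simp: algebra_simps)
  moreover have "H' s \<le> 0" if "s \<ge> T" for s
    unfolding H'_def using E'_le[OF that] by (simp add: mult_nonpos_nonneg)
  ultimately have "H t \<le> H T"
    using nonincreasing_of_nonpos_deriv[of T H H' T t] \<open>T \<le> t\<close> by blast
  then show ?thesis unfolding H_def by (simp add: exp_minus field_simps exp_diff)
qed

section \<open>The perturbed inertial dynamics\<close>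

locale perturbed_inertial_dynamics =
  fixes f :: "'a::{real_inner,complete_space} \<Rightarrow> real" and g :: "'a \<Rightarrow> 'a"
    and L t\<^sub>0 \<alpha> \<gamma> \<beta> T\<^sub>e :: real and x x' x'' e :: "real \<Rightarrow> 'a"
  assumes t\<^sub>0_pos: "t\<^sub>0 > 0"
    and convex: "convex_on UNIV f"
    and gradient: "\<And>y. (f has_derivative (\<lambda>h. inner (g y) h)) (at y)"
    and lipschitz: "L-lipschitz_on UNIV g"
    and \<alpha>: "\<alpha> > 3" and \<gamma>: "\<gamma> > 0" and \<beta>: "\<beta> \<ge> 0"
    and e_cont: "continuous_on {t\<^sub>0..} e"
    and T\<^sub>e: "T\<^sub>e \<ge> t\<^sub>0"
    and e_integrable: "set_integrable lborel {T\<^sub>e..} (\<lambda>t. (t + L * t\<^sup>2) * norm (e t))"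
    and x_deriv: "\<And>t. t \<ge> t\<^sub>0 \<Longrightarrow> (x has_vector_derivative x' t) (at t within {t\<^sub>0..})"
    and x'_deriv: "\<And>t. t \<ge> t\<^sub>0 \<Longrightarrow> (x' has_vector_derivative x'' t) (at t within {t\<^sub>0..})"
    and ode: "\<And>t. t \<ge> t\<^sub>0 \<Longrightarrow> x'' t + (\<alpha> / t) *\<^sub>R x' t + g (x t + (\<gamma> + \<beta> / t) *\<^sub>R x' t) + e t = 0"
begin

definition "bt t = \<gamma> + \<beta> / t"
definition "y t = x t + bt t *\<^sub>R x' t"
definition "D t = t\<^sup>2 - \<alpha> * \<gamma> * t - \<beta> * (\<alpha> + 1)"

text \<open>\<open>acoef b\<close> is the coefficient \<open>a(t)\<close> of the statement, written as a single fraction.\<close>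
definition "acoef b t = t\<^sup>2 * (t\<^sup>2 - b * \<gamma> * t - b * \<beta>) / D t"
definition "acoef' b t = ((4 * t ^ 3 - 3 * b * \<gamma> * t\<^sup>2 - 2 * b * \<beta> * t) * D t
                      - (t ^ 4 - b * \<gamma> * t ^ 3 - b * \<beta> * t\<^sup>2) * (2 * t - \<alpha> * \<gamma>)) / (D t)\<^sup>2"

definition "gap z t = f (y t) - f z"

definition "energy z b t = acoef b t * gap z t + t\<^sup>2 / 2 * inner (x' t) (x' t)
    + b * t * inner (x t - z) (x' t) + b * (\<alpha> - 1) / 2 * inner (x t - z) (x t - z)"
definition "energy' z b t = (acoef' b t - t * b) * gap z t - (\<alpha> - 1 - b) * t * inner (x' t) (x' t)
    - acoef b t * bt t * inner (g (y t)) (g (y t)) - acoef b t * bt t * inner (g (y t)) (e t)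
    - t * inner (b *\<^sub>R (x t - z) + t *\<^sub>R x' t) (e t) - t * b * (inner (y t - z) (g (y t)) - gap z t)"

lemma L_nonneg: "L \<ge> 0"
  using lipschitz by (rule lipschitz_on_nonneg)

lemma g_lipschitz: "norm (g u - g w) \<le> L * norm (u - w)"
  using lipschitz_onD[OF lipschitz] by (simp add: dist_norm)

lemma at_within_eq_at: "t > t\<^sub>0 \<Longrightarrow> at t within {t\<^sub>0..} = at t"
  by (intro at_within_interior) (simp add: interior_Ici[of "t\<^sub>0 - 1"])

lemma x_has_derivative: "t > t\<^sub>0 \<Longrightarrow> (x has_vector_derivative x' t) (at t)"
  using x_deriv[of t] at_within_eq_at[of t] by simp

lemma x'_has_derivative:
  assumes "t > t\<^sub>0"
  shows "(x' has_vector_derivative - ((\<alpha> / t) *\<^sub>R x' t + g (y t) + e t)) (at t)"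
proof -
  have "x'' t + ((\<alpha> / t) *\<^sub>R x' t + g (y t) + e t) = 0"
    using ode[of t] assms unfolding y_def bt_def by (simp add: add.assoc)
  then have "x'' t = - ((\<alpha> / t) *\<^sub>R x' t + g (y t) + e t)"
    using eq_neg_iff_add_eq_0 by blast
  then show ?thesis using x'_deriv[of t] at_within_eq_at[OF assms] assms by simp
qed

lemma acoef_has_derivative: "D t \<noteq> 0 \<Longrightarrow> (acoef b has_real_derivative acoef' b t) (at t)"
proof -
  assume "D t \<noteq> 0"
  have "acoef b = (\<lambda>s. (s ^ 4 - b * \<gamma> * s ^ 3 - b * \<beta> * s\<^sup>2) / D s)"
    unfolding acoef_def by (rule ext) (simp add: algebra_simps power2_eq_square power3_eq_cube power4_eq_xxxx)
  moreover have "((\<lambda>s. (s ^ 4 - b * \<gamma> * s ^ 3 - b * \<beta> * s\<^sup>2) / D s) has_real_derivative acoef' b t) (at t)"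
    unfolding acoef'_def D_def using \<open>D t \<noteq> 0\<close>[unfolded D_def]
    by (auto intro!: derivative_eq_intros simp: power2_eq_square power3_eq_cube)
  ultimately show ?thesis by simp
qed

lemma acoef_cancellation:
  assumes "D t \<noteq> 0" "t \<noteq> 0"
  shows "acoef b t * (1 - \<beta> / t\<^sup>2 - \<alpha> * bt t / t) = t\<^sup>2 - t * b * bt t"
proof -
  have "1 - \<beta> / t\<^sup>2 - \<alpha> * bt t / t = D t / t\<^sup>2"
    unfolding D_def bt_def using assms(2) by (simp add: field_simps power2_eq_square)
  then show ?thesis unfolding acoef_def bt_def using assms by (simp add: field_simps power2_eq_square)
qed

lemma y_has_derivative:
  assumes "t > t\<^sub>0"
  shows "(y has_vector_derivative
           (1 - \<beta> / t\<^sup>2 - \<alpha> * bt t / t) *\<^sub>R x' t - bt t *\<^sub>R (g (y t) + e t)) (at t)"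
proof -
  have "t \<noteq> 0" using assms t\<^sub>0_pos by simp
  then have "(bt has_real_derivative - \<beta> / t\<^sup>2) (at t)"
    unfolding bt_def[abs_def] by (auto intro!: derivative_eq_intros simp: power2_eq_square)
  then have "(y has_vector_derivative x' t + (bt t *\<^sub>R - ((\<alpha> / t) *\<^sub>R x' t + g (y t) + e t)
               + (- \<beta> / t\<^sup>2) *\<^sub>R x' t)) (at t)"
    unfolding y_def[abs_def]
    by (intro has_vector_derivative_add x_has_derivative has_vector_derivative_scaleR
        x'_has_derivative[OF assms, unfolded y_def] assms)
  then show ?thesis by (simp add: algebra_simps)
qed

lemma energy_has_derivative:
  assumes t: "t > t\<^sub>0" and "D t \<noteq> 0"
  shows "(energy z b has_real_derivative energy' z b t) (at t)"
proof -
  have "t \<noteq> 0" using t t\<^sub>0_pos by simp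
  define w where "w = - ((\<alpha> / t) *\<^sub>R x' t + g (y t) + e t)"
  define c where "c = 1 - \<beta> / t\<^sup>2 - \<alpha> * bt t / t"
  have dx': "(x' has_vector_derivative w) (at t)"
    unfolding w_def by (rule x'_has_derivative[OF t])
  have dxz: "((\<lambda>s. x s - z) has_vector_derivative x' t) (at t)"
    using x_has_derivative[OF t] by (auto intro!: derivative_eq_intros)
  have dgap: "(gap z has_real_derivative inner (g (y t)) (c *\<^sub>R x' t - bt t *\<^sub>R (g (y t) + e t))) (at t)"
    unfolding gap_def[abs_def] c_def
    by (intro DERIV_diff[where E=0, simplified] has_real_derivative_compose_gradient[OF gradient]
        y_has_derivative t DERIV_const)
  have raw: "(energy z b has_real_derivative
        (acoef' b t * gap z t + inner (g (y t)) (c *\<^sub>R x' t - bt t *\<^sub>R (g (y t) + e t)) * acoef b t)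
      + (t * inner (x' t) (x' t) + (inner w (x' t) + inner (x' t) w) * (t\<^sup>2 / 2))
      + (b * inner (x t - z) (x' t) + (inner (x' t) (x' t) + inner (x t - z) w) * (b * t))
      + b * (\<alpha> - 1) / 2 * (inner (x' t) (x t - z) + inner (x t - z) (x' t))) (at t)"
    unfolding energy_def[abs_def]
    by (intro DERIV_add DERIV_mult DERIV_cmult acoef_has_derivative \<open>D t \<noteq> 0\<close> dgap
        has_real_derivative_inner dx' dxz) (auto intro!: derivative_eq_intros)
  have "acoef b t * c = t\<^sup>2 - t * b * bt t"
    unfolding c_def using acoef_cancellation \<open>D t \<noteq> 0\<close> \<open>t \<noteq> 0\<close> by blast
  then have cancel: "c * (acoef b t * s) = (t\<^sup>2 - t * b * bt t) * s" for s
    by (metis mult.assoc mult.commute)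
  have y_z: "inner (y t - z) (g (y t)) = inner (x t - z) (g (y t)) + bt t * inner (x' t) (g (y t))"
    unfolding y_def by (simp only: inner_add_left inner_diff_left inner_scaleR_left)
  show ?thesis
    using raw \<open>t \<noteq> 0\<close> unfolding energy'_def w_def y_z
    by (elim DERIV_cong) (simp add: cancel inner_add_left inner_add_right inner_diff_left inner_diff_right
        inner_commute algebra_simps power2_eq_square, simp add: field_simps)
qed

definition "b\<^sub>1 = (\<alpha> + 1) / 2"
definition "\<delta> = (\<alpha> - 3) / 4"

lemma b\<^sub>1: "b\<^sub>1 > 2" "\<alpha> - 1 - b\<^sub>1 > 0"
  unfolding b\<^sub>1_def using \<alpha> by auto

lemma \<delta>: "\<delta> > 0" "2 + \<delta> - b\<^sub>1 = - \<delta>"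
  unfolding \<delta>_def b\<^sub>1_def using \<alpha> by (auto simp: field_simps)

lemma bt_bounds:
  assumes "t \<ge> 1"
  shows "0 \<le> bt t" and "bt t \<le> \<gamma> + \<beta>"
proof -
  show "0 \<le> bt t" unfolding bt_def using \<gamma> \<beta> assms by simp
  have "\<beta> / t \<le> \<beta>" using \<beta> assms by (simp add: divide_le_eq mult_le_cancel_left1 order.trans[of _ \<beta>])
  then show "bt t \<le> \<gamma> + \<beta>" unfolding bt_def by simp
qed

lemma acoef_diff: "t \<noteq> 0 \<Longrightarrow> acoef b t - acoef 0 t = - b * t * (t\<^sup>2 * bt t / D t)"
  unfolding acoef_def bt_def by (cases "D t = 0") (simp_all add: field_simps power2_eq_square)

lemma energy_eq: "energy z b t = acoef b t * gap z t + (norm (b *\<^sub>R (x t - z) + t *\<^sub>R x' t))\<^sup>2 / 2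
                    + b * (\<alpha> - 1 - b) / 2 * (norm (x t - z))\<^sup>2"
  unfolding energy_def by (simp only: power2_norm_eq_inner)
    (simp add: inner_add_left inner_add_right inner_commute algebra_simps power2_eq_square, simp add: field_simps)

definition "large_time t \<longleftrightarrow> D t > 0
   \<and> t\<^sup>2 / 2 \<le> acoef b\<^sub>1 t \<and> acoef b\<^sub>1 t \<le> 2 * t\<^sup>2 \<and> t\<^sup>2 / 2 \<le> acoef 0 t \<and> acoef 0 t \<le> 2 * t\<^sup>2
   \<and> acoef' b\<^sub>1 t \<le> (2 + \<delta>) * t \<and> acoef' 0 t \<le> 3 * t \<and> t\<^sup>2 * bt t / D t \<le> \<gamma> + 1"

lemma eventually_large_time: "eventually large_time at_top"
proof -
  have acoef: "((\<lambda>t. acoef b t / t\<^sup>2) \<longlongrightarrow> 1) at_top" for b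
    unfolding acoef_def D_def by real_asymp
  have acoef': "((\<lambda>t. acoef' b t / t) \<longlongrightarrow> 2) at_top" for b
    unfolding acoef'_def D_def by real_asymp
  have ratio: "((\<lambda>t. t\<^sup>2 * bt t / D t) \<longlongrightarrow> \<gamma>) at_top"
    unfolding bt_def D_def by real_asymp
  have acoef_bounds: "eventually (\<lambda>t. 1/2 < acoef b t / t\<^sup>2 \<and> acoef b t / t\<^sup>2 < 2) at_top" for b
  proof -
    have "eventually (\<lambda>t. 1/2 < acoef b t / t\<^sup>2) at_top" by (rule order_tendstoD(1)[OF acoef]) simp
    moreover have "eventually (\<lambda>t. acoef b t / t\<^sup>2 < 2) at_top" by (rule order_tendstoD(2)[OF acoef]) simp
    ultimately show ?thesis by eventually_elim simp
  qed
  have "eventually (\<lambda>t. D t > 0) at_top"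
    unfolding D_def by real_asymp
  moreover have "eventually (\<lambda>t. t\<^sup>2 * bt t / D t < \<gamma> + 1) at_top"
    by (rule order_tendstoD(2)[OF ratio]) simp
  moreover note acoef_bounds[of b\<^sub>1] acoef_bounds[of 0]
  moreover have "eventually (\<lambda>t. acoef' b\<^sub>1 t / t < 2 + \<delta>) at_top"
    by (rule order_tendstoD(2)[OF acoef']) (use \<delta> in simp)
  moreover have "eventually (\<lambda>t. acoef' 0 t / t < 3) at_top"
    by (rule order_tendstoD(2)[OF acoef']) simp
  moreover note eventually_gt_at_top[of 0]
  ultimately show ?thesis
    unfolding large_time_def by eventually_elim (auto simp: field_simps)
qed

definition "psi t = (t + L * t\<^sup>2) * norm (e t)"
definition "Psi t = integral {T\<^sub>e..t} psi"

lemma psi_nonneg: "t \<ge> 0 \<Longrightarrow> psi t \<ge> 0"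
  unfolding psi_def using L_nonneg by simp

lemma psi_integrable: "psi integrable_on {T\<^sub>e..}"
  using set_borel_integral_eq_integral(1)[OF e_integrable] unfolding psi_def .

lemma Psi_has_derivative:
  assumes "t > T\<^sub>e"
  shows "(Psi has_real_derivative psi t) (at t)"
proof -
  have "continuous_on {T\<^sub>e..t + 1} psi"
    unfolding psi_def using T\<^sub>e by (intro continuous_intros continuous_on_subset[OF e_cont]) auto
  then have "(Psi has_real_derivative psi t) (at t within {T\<^sub>e..t + 1})"
    unfolding Psi_def[abs_def] using assms by (intro integral_has_real_derivative) auto
  moreover have "at t within {T\<^sub>e..t + 1} = at t" using assms by (intro at_within_interior) auto
  ultimately show ?thesis by simp
qed

lemma Psi_bounds:
  assumes "t \<ge> T\<^sub>e"
  shows "0 \<le> Psi t" and "Psi t \<le> integral {T\<^sub>e..} psi"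
proof -
  have "psi integrable_on {T\<^sub>e..t}"
    using psi_integrable by (rule integrable_on_subinterval) auto
  moreover have "psi s \<ge> 0" if "s \<ge> T\<^sub>e" for s
    using that T\<^sub>e t\<^sub>0_pos by (intro psi_nonneg) auto
  ultimately show "0 \<le> Psi t" "Psi t \<le> integral {T\<^sub>e..} psi"
    unfolding Psi_def using psi_integrable by (auto intro!: integral_nonneg integral_subset_le)
qed

lemma Psi_convergent: "\<exists>l. (Psi \<longlongrightarrow> l) at_top"
proof -
  have "\<exists>l. ((\<lambda>t. - Psi t) \<longlongrightarrow> l) at_top"
  proof (rule convergent_of_nonpos_deriv_bounded_below)
    show "((\<lambda>t. - Psi t) has_real_derivative - psi t) (at t)" if "t \<ge> T\<^sub>e + 1" for t
      using that by (intro DERIV_minus Psi_has_derivative) auto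
    show "- psi t \<le> 0" if "t \<ge> T\<^sub>e + 1" for t
      using that T\<^sub>e t\<^sub>0_pos psi_nonneg[of t] by auto
    show "- integral {T\<^sub>e..} psi \<le> - Psi t" if "t \<ge> T\<^sub>e + 1" for t
      using that Psi_bounds(2)[of t] by auto
  qed
  then show ?thesis using tendsto_minus by fastforce
qed

end

section \<open>Energy estimates relative to a minimizer\<close>

locale perturbed_inertial_dynamics_minimizer = perturbed_inertial_dynamics +
  fixes z :: 'a and T :: real
  assumes minimizer: "\<And>w. f z \<le> f w"
    and T: "T > T\<^sub>e" "T \<ge> 1"
    and large: "\<And>t. t \<ge> T \<Longrightarrow> large_time t"
begin

definition "state_norm t = norm (x t - z) + t * norm (x' t)"
definition "C\<^sub>e = 2 * (\<gamma> + \<beta>) * (1 + \<gamma> + \<beta>) + b\<^sub>1 + 1"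

lemma after_T: "t \<ge> T \<Longrightarrow> t > T\<^sub>e \<and> t > t\<^sub>0 \<and> t \<ge> 1 \<and> D t > 0"
  using T T\<^sub>e large[of t] unfolding large_time_def by auto

lemma acoef_bounds:
  assumes "t \<ge> T" and "b \<in> {0, b\<^sub>1}"
  shows "t\<^sup>2 / 2 \<le> acoef b t" and "acoef b t \<le> 2 * t\<^sup>2"
  using large[OF assms(1)] assms(2) unfolding large_time_def by auto

lemma acoef_nonneg:
  assumes "t \<ge> T" and "b \<in> {0, b\<^sub>1}"
  shows "0 \<le> acoef b t"
proof -
  have "0 \<le> t\<^sup>2 / 2" by simp
  with acoef_bounds(1)[OF assms] show ?thesis by linarith
qed

lemma energy_has_derivative_after_T:
  "t \<ge> T \<Longrightarrow> (energy z b has_real_derivative energy' z b t) (at t)"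
  using after_T[of t] by (intro energy_has_derivative) auto

lemma gap_nonneg: "0 \<le> gap z t"
  unfolding gap_def using minimizer by simp

lemma gap_le_inner: "gap z t \<le> inner (y t - z) (g (y t))"
  using convex_on_gradient_inequality[OF convex gradient, of "y t" z]
  unfolding gap_def by (simp add: inner_diff_left inner_diff_right inner_commute)

lemma C\<^sub>e_pos: "C\<^sub>e > 0"
  unfolding C\<^sub>e_def using \<gamma> \<beta> b\<^sub>1 by (simp add: add_pos_nonneg)

lemma state_norm_nonneg: "t \<ge> 0 \<Longrightarrow> state_norm t \<ge> 0"
  unfolding state_norm_def by simp

lemma norm_g_y_le:
  assumes "t \<ge> 1"
  shows "norm (g (y t)) \<le> L * ((1 + \<gamma> + \<beta>) * state_norm t)"
proof -
  have "g z = 0" using gradient_eq_0_at_minimizer[OF gradient minimizer] .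
  then have "norm (g (y t)) \<le> L * norm (y t - z)"
    using g_lipschitz[of "y t" z] by simp
  also have "norm (y t - z) \<le> norm (x t - z) + (\<gamma> + \<beta>) * (t * norm (x' t))"
  proof -
    have "norm (y t - z) \<le> norm (x t - z) + bt t * norm (x' t)"
      unfolding y_def using norm_triangle_ineq[of "x t - z" "bt t *\<^sub>R x' t"] bt_bounds[OF assms]
      by (simp add: algebra_simps)
    also have "bt t * norm (x' t) \<le> (\<gamma> + \<beta>) * (t * norm (x' t))"
      using bt_bounds[OF assms] assms \<gamma> \<beta>
      by (intro mult_mono) (auto simp: mult_le_cancel_right1)
    finally show ?thesis by simp
  qed
  also have "\<dots> \<le> (1 + \<gamma> + \<beta>) * state_norm t"
    unfolding state_norm_def using \<gamma> \<beta> assms by (simp add: algebra_simps mult_left_mono)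
  finally show ?thesis using L_nonneg by (simp add: mult_left_mono)
qed

lemma gradient_error_term_le:
  assumes t: "t \<ge> 1" and a: "0 \<le> acoef b t" "acoef b t \<le> 2 * t\<^sup>2"
  shows "- acoef b t * bt t * inner (g (y t)) (e t) \<le> C\<^sub>e * (L * t\<^sup>2 * norm (e t) * state_norm t)"
proof -
  have "state_norm t \<ge> 0" using t by (intro state_norm_nonneg) simp
  note bt = bt_bounds[OF t]
  have "- inner (g (y t)) (e t) \<le> norm (g (y t)) * norm (e t)"
    using Cauchy_Schwarz_ineq2[of "g (y t)" "e t"] by linarith
  then have "acoef b t * bt t * (- inner (g (y t)) (e t)) \<le> acoef b t * bt t * (norm (g (y t)) * norm (e t))"
    using a bt by (intro mult_left_mono) auto
  also have "\<dots> \<le> (2 * t\<^sup>2) * (\<gamma> + \<beta>) * ((L * ((1 + \<gamma> + \<beta>) * state_norm t)) * norm (e t))"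
    using a bt norm_g_y_le[OF t] by (intro mult_mono mult_right_mono) auto
  also have "\<dots> = 2 * (\<gamma> + \<beta>) * (1 + \<gamma> + \<beta>) * (L * t\<^sup>2 * norm (e t) * state_norm t)"
    by (simp add: algebra_simps)
  also have "\<dots> \<le> C\<^sub>e * (L * t\<^sup>2 * norm (e t) * state_norm t)"
    unfolding C\<^sub>e_def using \<open>state_norm t \<ge> 0\<close> L_nonneg b\<^sub>1 by (intro mult_right_mono) auto
  finally show ?thesis by simp
qed

lemma velocity_error_term_le:
  assumes t: "t \<ge> 1" and b: "0 \<le> b" "b \<le> b\<^sub>1"
  shows "- t * inner (b *\<^sub>R (x t - z) + t *\<^sub>R x' t) (e t) \<le> C\<^sub>e * (t * norm (e t) * state_norm t)"
proof -
  define w where "w = b *\<^sub>R (x t - z) + t *\<^sub>R x' t"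
  have "state_norm t \<ge> 0" using t by (intro state_norm_nonneg) simp
  have "norm w \<le> b * norm (x t - z) + t * norm (x' t)"
    unfolding w_def using b t norm_triangle_le[of "b *\<^sub>R (x t - z)" "t *\<^sub>R x' t"] by simp
  also have "\<dots> \<le> (b\<^sub>1 + 1) * state_norm t"
  proof -
    have "b * norm (x t - z) \<le> (b\<^sub>1 + 1) * norm (x t - z)" using b by (intro mult_right_mono) auto
    moreover have "t * norm (x' t) \<le> (b\<^sub>1 + 1) * (t * norm (x' t))"
      using b\<^sub>1 t mult_right_mono[of 1 "b\<^sub>1 + 1" "t * norm (x' t)"] by simp
    ultimately show ?thesis unfolding state_norm_def by (simp add: algebra_simps)
  qed
  finally have "norm w \<le> (b\<^sub>1 + 1) * state_norm t" .
  have "- t * inner w (e t) \<le> t * (norm w * norm (e t))"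
    using Cauchy_Schwarz_ineq2[of w "e t"] t mult_left_mono[of "- inner w (e t)" _ t] by simp
  also have "\<dots> \<le> t * ((b\<^sub>1 + 1) * state_norm t * norm (e t))"
    using \<open>norm w \<le> (b\<^sub>1 + 1) * state_norm t\<close> t by (intro mult_left_mono mult_right_mono) auto
  also have "\<dots> = (b\<^sub>1 + 1) * (t * norm (e t) * state_norm t)" by (simp add: algebra_simps)
  also have "\<dots> \<le> C\<^sub>e * (t * norm (e t) * state_norm t)"
    unfolding C\<^sub>e_def using \<open>state_norm t \<ge> 0\<close> t \<gamma> \<beta> by (intro mult_right_mono) auto
  finally show ?thesis unfolding w_def .
qed

lemma error_terms_le:
  assumes t: "t \<ge> 1" and b: "0 \<le> b" "b \<le> b\<^sub>1" and a: "0 \<le> acoef b t" "acoef b t \<le> 2 * t\<^sup>2"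
  shows "- acoef b t * bt t * inner (g (y t)) (e t) - t * inner (b *\<^sub>R (x t - z) + t *\<^sub>R x' t) (e t)
         \<le> C\<^sub>e * psi t * state_norm t"
  using gradient_error_term_le[OF t a] velocity_error_term_le[OF t b]
  unfolding psi_def by (simp add: algebra_simps)

lemma energy'_b\<^sub>1_le:
  assumes "t \<ge> T"
  shows "energy' z b\<^sub>1 t \<le> - \<delta> * t * gap z t + C\<^sub>e * psi t * state_norm t"
proof -
  have t: "t > 0" "t \<ge> 1" using after_T[OF assms] by auto
  have a: "0 \<le> acoef b\<^sub>1 t" "acoef b\<^sub>1 t \<le> 2 * t\<^sup>2"
    using acoef_nonneg[OF assms] acoef_bounds[OF assms] by auto
  have "(acoef' b\<^sub>1 t - t * b\<^sub>1) * gap z t \<le> ((2 + \<delta>) * t - t * b\<^sub>1) * gap z t"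
    using large[OF assms] gap_nonneg unfolding large_time_def by (intro mult_right_mono) auto
  also have "\<dots> = (2 + \<delta> - b\<^sub>1) * t * gap z t" by (simp add: algebra_simps)
  also have "\<dots> = - \<delta> * t * gap z t" unfolding \<delta>(2) ..
  finally have "(acoef' b\<^sub>1 t - t * b\<^sub>1) * gap z t \<le> - \<delta> * t * gap z t" .
  moreover have "(\<alpha> - 1 - b\<^sub>1) * t * inner (x' t) (x' t) \<ge> 0" using b\<^sub>1 t by simp
  moreover have "acoef b\<^sub>1 t * bt t * inner (g (y t)) (g (y t)) \<ge> 0"
    using a bt_bounds[OF t(2)] by simp
  moreover have "t * b\<^sub>1 * (inner (y t - z) (g (y t)) - gap z t) \<ge> 0"
    using gap_le_inner b\<^sub>1 t by simp
  moreover have "- acoef b\<^sub>1 t * bt t * inner (g (y t)) (e t) - t * inner (b\<^sub>1 *\<^sub>R (x t - z) + t *\<^sub>R x' t) (e t)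
         \<le> C\<^sub>e * psi t * state_norm t"
    using error_terms_le[OF t(2) _ _ a] b\<^sub>1 by auto
  ultimately show ?thesis unfolding energy'_def by linarith
qed

lemma energy'_0_le:
  assumes "t \<ge> T"
  shows "energy' z 0 t \<le> 3 * t * gap z t + C\<^sub>e * psi t * state_norm t"
proof -
  have t: "t > 0" "t \<ge> 1" using after_T[OF assms] by auto
  have a: "0 \<le> acoef 0 t" "acoef 0 t \<le> 2 * t\<^sup>2"
    using acoef_nonneg[OF assms] acoef_bounds[OF assms] by auto
  have "acoef' 0 t * gap z t \<le> 3 * t * gap z t"
    using large[OF assms] gap_nonneg unfolding large_time_def by (intro mult_right_mono) auto
  moreover have "(\<alpha> - 1) * t * inner (x' t) (x' t) \<ge> 0" using \<alpha> t by simp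
  moreover have "acoef 0 t * bt t * inner (g (y t)) (g (y t)) \<ge> 0"
    using a bt_bounds[OF t(2)] by simp
  moreover have "- acoef 0 t * bt t * inner (g (y t)) (e t) - t * inner (t *\<^sub>R x' t) (e t)
         \<le> C\<^sub>e * psi t * state_norm t"
    using error_terms_le[OF t(2) _ _ a] b\<^sub>1 by auto
  ultimately show ?thesis unfolding energy'_def by simp
qed

lemma energy_lower_bounds:
  assumes "t \<ge> T" and "b \<in> {0, b\<^sub>1}"
  shows "acoef b t * gap z t \<le> energy z b t" and "0 \<le> energy z b t"
proof -
  have "0 \<le> acoef b t" using acoef_nonneg[OF assms] .
  moreover have "b * (\<alpha> - 1 - b) / 2 * (norm (x t - z))\<^sup>2 \<ge> 0" using assms(2) b\<^sub>1 by auto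
  ultimately show "acoef b t * gap z t \<le> energy z b t" "0 \<le> energy z b t"
    unfolding energy_eq using gap_nonneg by (auto intro!: add_nonneg_nonneg)
qed

lemma state_norm_le_energy:
  obtains C where "\<And>t. t \<ge> T \<Longrightarrow> state_norm t \<le> C * (1 + energy z b\<^sub>1 t)"
proof -
  define c where "c = 2 / (b\<^sub>1 * (\<alpha> - 1 - b\<^sub>1))"
  have "c > 0" unfolding c_def using b\<^sub>1 by simp
  have le_sq: "u \<le> 1 + u\<^sup>2" for u :: real
    using zero_le_power2[of "u - 1/2"] unfolding power2_eq_square by (simp add: algebra_simps)
  have "state_norm t \<le> ((1 + b\<^sub>1) * (1 + c) + 2) * (1 + energy z b\<^sub>1 t)" if "t \<ge> T" for t
  proof -
    define E where "E = energy z b\<^sub>1 t"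
    define w where "w = b\<^sub>1 *\<^sub>R (x t - z) + t *\<^sub>R x' t"
    have pos: "b\<^sub>1 * (\<alpha> - 1 - b\<^sub>1) / 2 > 0" using b\<^sub>1 by simp
    have "0 \<le> acoef b\<^sub>1 t * gap z t" "0 \<le> E"
      using acoef_nonneg[OF that] energy_lower_bounds[OF that, of b\<^sub>1] gap_nonneg unfolding E_def by auto
    moreover have "E = acoef b\<^sub>1 t * gap z t + (norm w)\<^sup>2 / 2 + b\<^sub>1 * (\<alpha> - 1 - b\<^sub>1) / 2 * (norm (x t - z))\<^sup>2"
      unfolding E_def w_def energy_eq ..
    moreover have "b\<^sub>1 * (\<alpha> - 1 - b\<^sub>1) / 2 * (norm (x t - z))\<^sup>2 \<ge> 0" using pos by simp
    moreover have "(norm w)\<^sup>2 \<ge> 0" by simp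
    ultimately have "(norm w)\<^sup>2 \<le> 2 * E" and "b\<^sub>1 * (\<alpha> - 1 - b\<^sub>1) / 2 * (norm (x t - z))\<^sup>2 \<le> E"
      by linarith+
    then have "(norm (x t - z))\<^sup>2 \<le> c * E"
      unfolding c_def using pos by (simp add: field_simps)
    have "t * norm (x' t) \<le> norm w + b\<^sub>1 * norm (x t - z)"
      using after_T[OF that] norm_triangle_ineq4[of w "b\<^sub>1 *\<^sub>R (x t - z)"] b\<^sub>1 unfolding w_def by simp
    then have "state_norm t \<le> (1 + b\<^sub>1) * norm (x t - z) + norm w"
      unfolding state_norm_def by (simp add: algebra_simps)
    also have "\<dots> \<le> (1 + b\<^sub>1) * (1 + c * E) + (1 + 2 * E)"
      using le_sq[of "norm (x t - z)"] le_sq[of "norm w"] \<open>(norm w)\<^sup>2 \<le> 2 * E\<close>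
        \<open>(norm (x t - z))\<^sup>2 \<le> c * E\<close> b\<^sub>1
      by (intro add_mono mult_left_mono) auto
    also have "\<dots> \<le> ((1 + b\<^sub>1) * (1 + c) + 2) * (1 + E)"
      using \<open>0 \<le> E\<close> \<open>c > 0\<close> b\<^sub>1 by (simp add: algebra_simps mult_left_mono)
    finally show ?thesis unfolding E_def .
  qed
  then show ?thesis using that by blast
qed

lemma state_norm_bounded:
  obtains R where "\<And>t. t \<ge> T \<Longrightarrow> state_norm t \<le> R"
proof -
  obtain C where C: "\<And>t. t \<ge> T \<Longrightarrow> state_norm t \<le> C * (1 + energy z b\<^sub>1 t)"
    by (rule state_norm_le_energy) blast
  have E_nonneg: "0 \<le> energy z b\<^sub>1 t" if "t \<ge> T" for t
    using energy_lower_bounds(2)[OF that] by simp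
  have "0 \<le> C * (1 + energy z b\<^sub>1 T)"
    using C[of T] state_norm_nonneg[of T] T by simp
  then have "C \<ge> 0" using E_nonneg[of T] by (simp add: zero_le_mult_iff)
  define I where "I = integral {T\<^sub>e..} psi"
  have "1 + energy z b\<^sub>1 t \<le> (1 + energy z b\<^sub>1 T) * exp (C\<^sub>e * C * I)" if "t \<ge> T" for t
  proof -
    have "energy' z b\<^sub>1 s \<le> C\<^sub>e * C * psi s * (1 + energy z b\<^sub>1 s)" if "s \<ge> T" for s
    proof -
      have "0 \<le> \<delta> * s * gap z s" using \<delta>(1) gap_nonneg[of s] after_T[OF that] by simp
      then have "energy' z b\<^sub>1 s \<le> C\<^sub>e * psi s * state_norm s"
        using energy'_b\<^sub>1_le[OF that] by linarith
      also have "\<dots> \<le> C\<^sub>e * psi s * (C * (1 + energy z b\<^sub>1 s))"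
        using C[OF that] C\<^sub>e_pos psi_nonneg[of s] after_T[OF that] by (intro mult_left_mono) auto
      finally show ?thesis by (simp add: algebra_simps)
    qed
    then have "1 + energy z b\<^sub>1 t \<le> (1 + energy z b\<^sub>1 T) * exp (C\<^sub>e * C * (Psi t - Psi T))"
      using energy_has_derivative_after_T Psi_has_derivative after_T \<open>t \<ge> T\<close>
      by (intro gronwall_exp_bound[where \<psi> = psi]) auto
    also have "\<dots> \<le> (1 + energy z b\<^sub>1 T) * exp (C\<^sub>e * C * I)"
      using Psi_bounds[of T] Psi_bounds[of t] that T E_nonneg[of T] C\<^sub>e_pos \<open>C \<ge> 0\<close>
      unfolding I_def by (intro mult_left_mono) (auto intro!: mult_left_mono)
    finally show ?thesis .
  qed
  then have "state_norm t \<le> C * ((1 + energy z b\<^sub>1 T) * exp (C\<^sub>e * C * I))" if "t \<ge> T" for t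
    using C[OF that] mult_left_mono[OF _ \<open>C \<ge> 0\<close>] that by (meson order_trans)
  then show ?thesis by (rule that)
qed

lemma energy'_le_psi:
  obtains K where "K \<ge> 0"
    and "\<And>t. t \<ge> T \<Longrightarrow> energy' z b\<^sub>1 t \<le> - \<delta> * t * gap z t + K * psi t"
    and "\<And>t. t \<ge> T \<Longrightarrow> energy' z 0 t \<le> 3 * t * gap z t + K * psi t"
proof -
  obtain R where R: "\<And>t. t \<ge> T \<Longrightarrow> state_norm t \<le> R" by (rule state_norm_bounded) blast
  have "R \<ge> 0" using R[of T] state_norm_nonneg[of T] T by simp
  have bound: "C\<^sub>e * psi t * state_norm t \<le> C\<^sub>e * R * psi t" if "t \<ge> T" for t
    using R[OF that] C\<^sub>e_pos psi_nonneg[of t] after_T[OF that]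
      mult_left_mono[of "state_norm t" R "C\<^sub>e * psi t"] by (simp add: algebra_simps)
  show ?thesis
  proof (rule that[of "C\<^sub>e * R"])
    show "0 \<le> C\<^sub>e * R" using C\<^sub>e_pos \<open>R \<ge> 0\<close> by simp
    show "energy' z b\<^sub>1 t \<le> - \<delta> * t * gap z t + C\<^sub>e * R * psi t" if "t \<ge> T" for t
      using energy'_b\<^sub>1_le[OF that] bound[OF that] by linarith
    show "energy' z 0 t \<le> 3 * t * gap z t + C\<^sub>e * R * psi t" if "t \<ge> T" for t
      using energy'_0_le[OF that] bound[OF that] by linarith
  qed
qed

lemma energy_b\<^sub>1_convergent: "\<exists>l. (energy z b\<^sub>1 \<longlongrightarrow> l) at_top"
proof -
  obtain K where "K \<ge> 0" and K: "\<And>t. t \<ge> T \<Longrightarrow> energy' z b\<^sub>1 t \<le> - \<delta> * t * gap z t + K * psi t"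
    by (rule energy'_le_psi) blast+
  define P where "P t = energy z b\<^sub>1 t - K * Psi t" for t
  have deriv: "(P has_real_derivative energy' z b\<^sub>1 t - K * psi t) (at t)" if "t \<ge> T" for t
    unfolding P_def using that after_T[OF that]
    by (auto intro!: derivative_eq_intros energy_has_derivative_after_T Psi_has_derivative)
  have nonpos: "energy' z b\<^sub>1 t - K * psi t \<le> 0" if "t \<ge> T" for t
  proof -
    have "0 \<le> \<delta> * t * gap z t" using \<delta>(1) gap_nonneg[of t] after_T[OF that] by simp
    then show ?thesis using K[OF that] by linarith
  qed
  have bounded: "- K * integral {T\<^sub>e..} psi \<le> P t" if "t \<ge> T" for t
  proof -
    have "K * Psi t \<le> K * integral {T\<^sub>e..} psi"
      using Psi_bounds(2)[of t] after_T[OF that] \<open>K \<ge> 0\<close> by (intro mult_left_mono) auto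
    then show ?thesis using energy_lower_bounds(2)[OF that, of b\<^sub>1] unfolding P_def by simp
  qed
  obtain l where "(P \<longlongrightarrow> l) at_top"
    using convergent_of_nonpos_deriv_bounded_below[OF deriv nonpos bounded] by blast
  moreover obtain l' where "(Psi \<longlongrightarrow> l') at_top" using Psi_convergent by blast
  ultimately have "((\<lambda>t. P t + K * Psi t) \<longlongrightarrow> l + K * l') at_top" by (intro tendsto_intros)
  then show ?thesis unfolding P_def by auto
qed

lemma energy_0_convergent: "\<exists>l. (energy z 0 \<longlongrightarrow> l) at_top"
proof -
  obtain K where "K \<ge> 0"
    and K\<^sub>1: "\<And>t. t \<ge> T \<Longrightarrow> energy' z b\<^sub>1 t \<le> - \<delta> * t * gap z t + K * psi t"
    and K\<^sub>0: "\<And>t. t \<ge> T \<Longrightarrow> energy' z 0 t \<le> 3 * t * gap z t + K * psi t"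
    by (rule energy'_le_psi) blast+
  \<comment> \<open>the dissipation \<open>-\<delta> t gap\<close> of \<open>energy z b\<^sub>1\<close> absorbs the growth \<open>3 t gap\<close> of \<open>energy z 0\<close>\<close>
  define K' where "K' = (1 + 3 / \<delta>) * K"
  define P where "P t = energy z 0 t + 3 / \<delta> * energy z b\<^sub>1 t - K' * Psi t" for t
  have "K' \<ge> 0" unfolding K'_def using \<open>K \<ge> 0\<close> \<delta>(1) by simp
  have deriv: "(P has_real_derivative energy' z 0 t + 3 / \<delta> * energy' z b\<^sub>1 t - K' * psi t) (at t)"
    if "t \<ge> T" for t
    unfolding P_def using that after_T[OF that] \<delta>(1)
    by (auto intro!: derivative_eq_intros energy_has_derivative_after_T Psi_has_derivative)
  have nonpos: "energy' z 0 t + 3 / \<delta> * energy' z b\<^sub>1 t - K' * psi t \<le> 0" if "t \<ge> T" for t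
  proof -
    have "3 / \<delta> * energy' z b\<^sub>1 t \<le> 3 / \<delta> * (- \<delta> * t * gap z t + K * psi t)"
      using K\<^sub>1[OF that] \<delta>(1) by (intro mult_left_mono) auto
    also have "\<dots> = - 3 * t * gap z t + 3 / \<delta> * K * psi t"
      using \<delta>(1) by (simp add: field_simps)
    finally show ?thesis using K\<^sub>0[OF that] unfolding K'_def by (simp add: algebra_simps)
  qed
  have bounded: "- K' * integral {T\<^sub>e..} psi \<le> P t" if "t \<ge> T" for t
  proof -
    have "0 \<le> energy z 0 t" "0 \<le> 3 / \<delta> * energy z b\<^sub>1 t"
      using energy_lower_bounds(2)[OF that] \<delta>(1) by auto
    moreover have "K' * Psi t \<le> K' * integral {T\<^sub>e..} psi"
      using Psi_bounds(2)[of t] after_T[OF that] \<open>K' \<ge> 0\<close> by (intro mult_left_mono) auto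
    ultimately show ?thesis unfolding P_def by linarith
  qed
  obtain l where "(P \<longlongrightarrow> l) at_top"
    using convergent_of_nonpos_deriv_bounded_below[OF deriv nonpos bounded] by blast
  moreover obtain l\<^sub>1 where "(energy z b\<^sub>1 \<longlongrightarrow> l\<^sub>1) at_top" using energy_b\<^sub>1_convergent by blast
  moreover obtain l' where "(Psi \<longlongrightarrow> l') at_top" using Psi_convergent by blast
  ultimately have "((\<lambda>t. P t - 3 / \<delta> * energy z b\<^sub>1 t + K' * Psi t) \<longlongrightarrow> l - 3 / \<delta> * l\<^sub>1 + K' * l') at_top"
    by (intro tendsto_intros)
  then show ?thesis unfolding P_def by auto
qed

lemma t_gap_tendsto_0: "((\<lambda>t. t * gap z t) \<longlongrightarrow> 0) at_top"
proof (rule Lim_null_comparison)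
  obtain l where "(energy z 0 \<longlongrightarrow> l) at_top" using energy_0_convergent by blast
  then show "((\<lambda>t. 2 * energy z 0 t / t) \<longlongrightarrow> 0) at_top"
    by (intro tendsto_divide_0[OF tendsto_mult[OF tendsto_const]]
        filterlim_at_top_imp_at_infinity filterlim_ident)
  show "\<forall>\<^sub>F t in at_top. norm (t * gap z t) \<le> 2 * energy z 0 t / t"
    using eventually_ge_at_top[of T]
  proof eventually_elim
    case (elim t)
    have "t > 0" using after_T[OF elim] by simp
    have "t\<^sup>2 / 2 * gap z t \<le> acoef 0 t * gap z t"
      using acoef_bounds(1)[OF elim, of 0] gap_nonneg by (intro mult_right_mono) auto
    also have "\<dots> \<le> energy z 0 t" using energy_lower_bounds(1)[OF elim] by simp
    finally show ?case using \<open>t > 0\<close> gap_nonneg[of t] by (simp add: field_simps power2_eq_square)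
  qed
qed

lemma gap_tendsto_0: "((\<lambda>t. gap z t) \<longlongrightarrow> 0) at_top"
proof (rule Lim_null_comparison)
  show "\<forall>\<^sub>F t in at_top. norm (gap z t) \<le> t * gap z t"
    using eventually_ge_at_top[of 1]
    by eventually_elim (use gap_nonneg mult_right_mono[of 1 _ "gap z _"] in force)
qed (rule t_gap_tendsto_0)

lemma acoef_diff_gap_tendsto_0: "((\<lambda>t. (acoef b\<^sub>1 t - acoef 0 t) * gap z t) \<longlongrightarrow> 0) at_top"
proof (rule Lim_null_comparison)
  show "((\<lambda>t. b\<^sub>1 * (\<gamma> + 1) * (t * gap z t)) \<longlongrightarrow> 0) at_top"
    using tendsto_mult_right_zero[OF t_gap_tendsto_0] .
  show "\<forall>\<^sub>F t in at_top. norm ((acoef b\<^sub>1 t - acoef 0 t) * gap z t) \<le> b\<^sub>1 * (\<gamma> + 1) * (t * gap z t)"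
    using eventually_ge_at_top[of T]
  proof eventually_elim
    case (elim t)
    have "t > 0" "t \<ge> 1" "D t > 0" using after_T[OF elim] by auto
    have ratio: "0 \<le> t\<^sup>2 * bt t / D t" "t\<^sup>2 * bt t / D t \<le> \<gamma> + 1"
      using bt_bounds(1)[OF \<open>t \<ge> 1\<close>] \<open>D t > 0\<close> large[OF elim] unfolding large_time_def by auto
    have "norm ((acoef b\<^sub>1 t - acoef 0 t) * gap z t) = b\<^sub>1 * (t * gap z t) * (t\<^sup>2 * bt t / D t)"
      using acoef_diff[of t b\<^sub>1] \<open>t > 0\<close> \<open>D t > 0\<close> bt_bounds(1)[OF \<open>t \<ge> 1\<close>] b\<^sub>1 gap_nonneg[of t]
      by (simp add: abs_mult)
    also have "\<dots> \<le> b\<^sub>1 * (t * gap z t) * (\<gamma> + 1)"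
      using ratio b\<^sub>1 \<open>t > 0\<close> gap_nonneg[of t] by (intro mult_left_mono) auto
    finally show ?case by (simp add: algebra_simps)
  qed
qed

lemma dist_convergent: "\<exists>l. ((\<lambda>t. norm (x t - z)) \<longlongrightarrow> l) at_top"
proof -
  define h where "h t = inner (x t - z) (x t - z) / 2" for t
  define h' where "h' t = inner (x t - z) (x' t)" for t
  have diff: "energy z b\<^sub>1 t - energy z 0 t = (acoef b\<^sub>1 t - acoef 0 t) * gap z t + b\<^sub>1 * ((\<alpha> - 1) * h t + t * h' t)"
    for t
  proof -
    have "k\<^sub>1 * F + A + b\<^sub>1 * t * B + b\<^sub>1 * (\<alpha> - 1) / 2 * C - (k\<^sub>0 * F + A + 0 * t * B + 0 * (\<alpha> - 1) / 2 * C)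
        = (k\<^sub>1 - k\<^sub>0) * F + b\<^sub>1 * ((\<alpha> - 1) * (C / 2) + t * B)" for k\<^sub>1 k\<^sub>0 F A B C :: real
      by (simp add: algebra_simps)
    then show ?thesis unfolding energy_def h_def h'_def .
  qed
  note acoef_diff_gap_tendsto_0
  moreover obtain l\<^sub>1 l\<^sub>0 where "(energy z b\<^sub>1 \<longlongrightarrow> l\<^sub>1) at_top" "(energy z 0 \<longlongrightarrow> l\<^sub>0) at_top"
    using energy_b\<^sub>1_convergent energy_0_convergent by blast
  ultimately have "((\<lambda>t. (energy z b\<^sub>1 t - energy z 0 t - (acoef b\<^sub>1 t - acoef 0 t) * gap z t) / b\<^sub>1)
      \<longlongrightarrow> (l\<^sub>1 - l\<^sub>0 - 0) / b\<^sub>1) at_top"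
    by (intro tendsto_intros) (use b\<^sub>1 in auto)
  then have lim: "((\<lambda>t. (\<alpha> - 1) * h t + t * h' t) \<longlongrightarrow> (l\<^sub>1 - l\<^sub>0) / b\<^sub>1) at_top"
    unfolding diff using b\<^sub>1 by simp
  have deriv: "(h has_real_derivative h' t) (at t)" if "t \<ge> T" for t
  proof -
    have "((\<lambda>s. x s - z) has_vector_derivative x' t) (at t)"
      using x_has_derivative after_T[OF that] by (auto intro!: derivative_eq_intros)
    from DERIV_cdivide[OF has_real_derivative_inner[OF this this], of 2]
    show ?thesis unfolding h_def[abs_def] h'_def by (simp add: inner_commute)
  qed
  have "(h \<longlongrightarrow> (l\<^sub>1 - l\<^sub>0) / b\<^sub>1 / (\<alpha> - 1)) at_top"
    using \<alpha> by (intro tendsto_of_tendsto_euler_combination[OF _ deriv lim]) simp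
  then have "((\<lambda>t. sqrt (2 * h t)) \<longlongrightarrow> sqrt (2 * ((l\<^sub>1 - l\<^sub>0) / b\<^sub>1 / (\<alpha> - 1)))) at_top"
    by (intro tendsto_intros)
  moreover have "sqrt (2 * h t) = norm (x t - z)" for t
    unfolding h_def by (simp add: norm_eq_sqrt_inner)
  ultimately show ?thesis by auto
qed

lemma y_minus_x_tendsto_0: "((\<lambda>t. norm (y t - x t)) \<longlongrightarrow> 0) at_top"
proof -
  obtain R where R: "\<And>t. t \<ge> T \<Longrightarrow> state_norm t \<le> R" by (rule state_norm_bounded) blast
  show ?thesis
  proof (rule Lim_null_comparison)
    show "((\<lambda>t. (\<gamma> + \<beta>) * R / t) \<longlongrightarrow> 0) at_top" by real_asymp
    show "\<forall>\<^sub>F t in at_top. norm (norm (y t - x t)) \<le> (\<gamma> + \<beta>) * R / t"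
      using eventually_ge_at_top[of T]
    proof eventually_elim
      case (elim t)
      have "t > 0" "t \<ge> 1" using after_T[OF elim] by auto
      have "t * norm (x' t) \<le> R" using R[OF elim] unfolding state_norm_def by (smt (verit) norm_ge_zero)
      then have "norm (x' t) \<le> R / t" using \<open>t > 0\<close> by (simp add: field_simps)
      then have "bt t * norm (x' t) \<le> (\<gamma> + \<beta>) * (R / t)"
        using bt_bounds[OF \<open>t \<ge> 1\<close>] by (intro mult_mono) auto
      then show ?case unfolding y_def using bt_bounds(1)[OF \<open>t \<ge> 1\<close>] by simp
    qed
  qed
qed

lemma x_bounded: obtains M where "\<And>t. t \<ge> T \<Longrightarrow> norm (x t) \<le> M"
proof -
  obtain R where R: "\<And>t. t \<ge> T \<Longrightarrow> state_norm t \<le> R" by (rule state_norm_bounded) blast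
  have "norm (x t) \<le> norm z + R" if "t \<ge> T" for t
    using R[OF that] norm_triangle_sub[of "x t" z] after_T[OF that] unfolding state_norm_def
    by (smt (verit) mult_nonneg_nonneg norm_ge_zero)
  then show ?thesis by (rule that)
qed

end

context perturbed_inertial_dynamics
begin

lemma weakly_converges_to_minimizer:
  assumes "\<exists>z. \<forall>w. f z \<le> f w"
  shows "\<exists>z. (\<forall>w. f z \<le> f w) \<and> weakly_converges_at_top x z"
proof -
  have "eventually (\<lambda>t. large_time t \<and> t > T\<^sub>e \<and> t \<ge> 1) at_top"
    using eventually_large_time eventually_gt_at_top eventually_ge_at_top by (intro eventually_conj)
  then obtain T where T: "T > T\<^sub>e" "T \<ge> 1" and large: "\<And>t. t \<ge> T \<Longrightarrow> large_time t"
    unfolding eventually_at_top_linorder by (metis order_refl)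
  define S where "S = {z. \<forall>w. f z \<le> f w}"
  have minimizer: "perturbed_inertial_dynamics_minimizer f g L t\<^sub>0 \<alpha> \<gamma> \<beta> T\<^sub>e x x' x'' e z T" if "z \<in> S" for z
    using that T large unfolding S_def
    by unfold_locales auto
  obtain z\<^sub>0 where "z\<^sub>0 \<in> S" using assms unfolding S_def by blast
  interpret z\<^sub>0: perturbed_inertial_dynamics_minimizer f g L t\<^sub>0 \<alpha> \<gamma> \<beta> T\<^sub>e x x' x'' e z\<^sub>0 T
    by (rule minimizer[OF \<open>z\<^sub>0 \<in> S\<close>])
  obtain M where "\<And>t. t \<ge> T \<Longrightarrow> norm (x t) \<le> M" by (rule z\<^sub>0.x_bounded) blast
  then have "\<exists>z\<in>S. weakly_converges_at_top x z"
  proof (rule opial)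
    show "\<exists>l. ((\<lambda>t. norm (x t - z)) \<longlongrightarrow> l) at_top" if "z \<in> S" for z
      using perturbed_inertial_dynamics_minimizer.dist_convergent[OF minimizer[OF that]] .
    show "u \<in> S" if s: "filterlim s at_top sequentially"
      and u: "\<forall>v. (\<lambda>n. inner (x (s n)) v) \<longlonglongrightarrow> inner u v" for s u
    proof -
      have "(\<lambda>n. gap z\<^sub>0 (s n) + f z\<^sub>0) \<longlonglongrightarrow> 0 + f z\<^sub>0"
        by (intro tendsto_intros filterlim_compose[OF z\<^sub>0.gap_tendsto_0 s])
      then have "(\<lambda>n. f (y (s n))) \<longlonglongrightarrow> f z\<^sub>0" unfolding gap_def by simp
      moreover have "(\<lambda>n. norm (y (s n) - x (s n))) \<longlonglongrightarrow> 0"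
        using filterlim_compose[OF z\<^sub>0.y_minus_x_tendsto_0 s] .
      ultimately have "f u \<le> f w" for w
        using \<open>z\<^sub>0 \<in> S\<close> u unfolding S_def
        by (intro convex_weak_limit_minimizer[OF convex gradient]) auto
      then show ?thesis unfolding S_def by blast
    qed
  qed
  then show ?thesis unfolding S_def by blast
qed

end

section \<open>Integrability of the perturbation\<close>

lemma set_integrable_tail_of_eventually_le:
  fixes e :: "real \<Rightarrow> 'a::real_normed_vector" and w m :: "real \<Rightarrow> real"
  assumes integrable: "set_integrable lborel {t\<^sub>0..} (\<lambda>t. m t * norm (e t))"
    and cont: "continuous_on {t\<^sub>0..} w" "continuous_on {t\<^sub>0..} e"
    and le: "eventually (\<lambda>t. 0 \<le> w t \<and> w t \<le> C * m t) at_top"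
  obtains T where "T \<ge> t\<^sub>0" and "set_integrable lborel {T..} (\<lambda>t. w t * norm (e t))"
proof -
  obtain T where T: "T \<ge> t\<^sub>0" and le_T: "\<And>t. t \<ge> T \<Longrightarrow> 0 \<le> w t \<and> w t \<le> C * m t"
    using le unfolding eventually_at_top_linorder by (metis nle_le order_trans)
  have "set_integrable lborel {T..} (\<lambda>t. w t * norm (e t))"
  proof (rule set_integrable_bound[of lborel "{T..}" "\<lambda>t. C * (m t * norm (e t))"])
    show "set_integrable lborel {T..} (\<lambda>t. C * (m t * norm (e t)))"
      using set_integrable_subset[OF integrable] T by (intro set_integrable_mult_right) auto
    have "continuous_on {T..} (\<lambda>t. w t * norm (e t))"
      using T by (intro continuous_intros continuous_on_subset[OF cont(1)] continuous_on_subset[OF cont(2)]) auto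
    then show "set_borel_measurable lborel {T..} (\<lambda>t. w t * norm (e t))"
      unfolding set_borel_measurable_def measurable_lborel2
      using borel_measurable_continuous_on_indicator[of "{T..}" "\<lambda>t. w t * norm (e t)"] by auto
    show "AE t in lborel. t \<in> {T..} \<longrightarrow> norm (w t * norm (e t)) \<le> norm (C * (m t * norm (e t)))"
    proof (intro always_eventually allI impI)
      fix t assume "t \<in> {T..}"
      then have "0 \<le> w t" "w t \<le> C * m t" using le_T by auto
      then have "norm (w t * norm (e t)) \<le> C * m t * norm (e t)" by (simp add: mult_right_mono)
      also have "\<dots> \<le> norm (C * (m t * norm (e t)))" by (metis abs_ge_self mult.assoc real_norm_def)
      finally show "norm (w t * norm (e t)) \<le> norm (C * (m t * norm (e t)))" .
    qed
  qed
  with T that show ?thesis by blast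
qed

lemma eventually_perturbation_weight_le_m:
  fixes a m :: "real \<Rightarrow> real"
  assumes "L \<ge> 0" "\<gamma> > 0" "\<beta> \<ge> 0" "b < \<alpha>"
    and a_def: "\<And>t. a t = t\<^sup>2 * (1 + ((\<alpha> - b) * \<gamma> * t - \<beta> * (\<alpha> + 1 - b))
                                  / (t\<^sup>2 - \<alpha> * \<gamma> * t - \<beta> * (\<alpha> + 1)))"
    and m_def: "\<And>t. m t = max t (max (L * \<bar>a t * (\<gamma> + \<beta> / t)\<bar>) (L * \<bar>a t\<bar> * (\<gamma> + \<beta> / t)\<^sup>2))"
  shows "eventually (\<lambda>t. 0 \<le> t + L * t\<^sup>2 \<and> t + L * t\<^sup>2 \<le> (1 + 1 / \<gamma>\<^sup>2) * m t) at_top"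
proof -
  have "eventually (\<lambda>t. (\<alpha> - b) * \<gamma> * t - \<beta> * (\<alpha> + 1 - b) \<ge> 0) at_top"
    using assms by real_asymp
  moreover have "eventually (\<lambda>t. t\<^sup>2 - \<alpha> * \<gamma> * t - \<beta> * (\<alpha> + 1) > 0) at_top"
    by real_asymp
  moreover note eventually_gt_at_top[of 0]
  ultimately show ?thesis
  proof eventually_elim
    case (elim t)
    then have "t\<^sup>2 \<le> a t" unfolding a_def by (simp add: mult_le_cancel_left1)
    moreover have "\<gamma> \<le> \<gamma> + \<beta> / t" using assms elim by simp
    ultimately have "t\<^sup>2 * \<gamma>\<^sup>2 \<le> \<bar>a t\<bar> * (\<gamma> + \<beta> / t)\<^sup>2"
      using assms by (intro mult_mono power_mono) auto
    then have "L * (t\<^sup>2 * \<gamma>\<^sup>2) \<le> L * (\<bar>a t\<bar> * (\<gamma> + \<beta> / t)\<^sup>2)"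
      using \<open>L \<ge> 0\<close> by (rule mult_left_mono)
    also have "\<dots> \<le> m t" unfolding m_def by (simp add: mult.assoc)
    finally have "L * t\<^sup>2 \<le> m t / \<gamma>\<^sup>2" using \<open>\<gamma> > 0\<close> by (simp add: field_simps)
    moreover have "t \<le> m t" unfolding m_def by simp
    ultimately show ?case using elim \<open>L \<ge> 0\<close> by (simp add: algebra_simps)
  qed
qed

theorem theorem8:
  fixes f :: "'a::{real_inner, complete_space} \<Rightarrow> real"
    and gradf :: "'a \<Rightarrow> 'a"
    and L t0 \<alpha> \<gamma> \<beta> b :: real
    and bt a m :: "real \<Rightarrow> real"
    and e x x' x'' :: "real \<Rightarrow> 'a"
  assumes t0_pos: "t0 > 0"
    and f_convex: "convex_on UNIV f"
    and f_grad: "\<And>y. (f has_derivative (\<lambda>h. inner (gradf y) h)) (at y)"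
    and grad_cont: "continuous_on UNIV gradf"
    and grad_lip: "L-lipschitz_on UNIV gradf"
    and minimizer_exists: "\<exists>z. \<forall>y. f z \<le> f y"
    and alpha: "\<alpha> > 3" and gamma: "\<gamma> > 0" and beta: "\<beta> \<ge> 0"
    and bt_def: "\<And>t. bt t = \<gamma> + \<beta> / t"
    and b: "0 < b" "b \<le> \<alpha> - 1"
    and a_def: "\<And>t. a t = t\<^sup>2 * (1 + ((\<alpha> - b) * \<gamma> * t - \<beta> * (\<alpha> + 1 - b))
                                  / (t\<^sup>2 - \<alpha> * \<gamma> * t - \<beta> * (\<alpha> + 1)))"
    and m_def: "\<And>t. m t = max t (max (L * \<bar>a t * bt t\<bar>) (L * \<bar>a t\<bar> * (bt t)\<^sup>2))"
    and e_cont: "continuous_on {t0..} e"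
    and e_L1: "set_integrable lborel {t0..} (\<lambda>t. m t * norm (e t))"
    and x_deriv: "\<And>t. t \<ge> t0 \<Longrightarrow> (x has_vector_derivative x' t) (at t within {t0..})"
    and x'_deriv: "\<And>t. t \<ge> t0 \<Longrightarrow> (x' has_vector_derivative x'' t) (at t within {t0..})"
    and ode: "\<And>t. t \<ge> t0 \<Longrightarrow>
               x'' t + (\<alpha> / t) *\<^sub>R x' t + gradf (x t + bt t *\<^sub>R x' t) + e t = 0"
  shows "\<exists>z. (\<forall>y. f z \<le> f y) \<and> weakly_converges_at_top x z"
proof -
  have "L \<ge> 0" using grad_lip by (rule lipschitz_on_nonneg)
  then have "eventually (\<lambda>t. 0 \<le> t + L * t\<^sup>2 \<and> t + L * t\<^sup>2 \<le> (1 + 1 / \<gamma>\<^sup>2) * m t) at_top"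
    using b by (intro eventually_perturbation_weight_le_m[OF _ gamma beta _ a_def m_def[unfolded bt_def]]) auto
  moreover have "continuous_on {t0..} (\<lambda>t. t + L * t\<^sup>2)" by (intro continuous_intros)
  ultimately obtain T\<^sub>e where "T\<^sub>e \<ge> t0"
    and "set_integrable lborel {T\<^sub>e..} (\<lambda>t. (t + L * t\<^sup>2) * norm (e t))"
    using set_integrable_tail_of_eventually_le[OF e_L1 _ e_cont] by blast
  moreover have "x'' t + (\<alpha> / t) *\<^sub>R x' t + gradf (x t + (\<gamma> + \<beta> / t) *\<^sub>R x' t) + e t = 0"
    if "t \<ge> t0" for t
    using ode[OF that] unfolding bt_def .
  ultimately interpret perturbed_inertial_dynamics f gradf L t0 \<alpha> \<gamma> \<beta> T\<^sub>e x x' x'' e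
    using t0_pos f_convex f_grad grad_lip alpha gamma beta e_cont x_deriv x'_deriv
    by unfold_locales
  show ?thesis by (rule weakly_converges_to_minimizer[OF minimizer_exists])
qed

end
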